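(* Let $n$ and $b$ be integers with $1\le b<\frac{n}{2}-1$, and let $BT\in\mathcal{CT}^*_{n,b}$. Then \[ M_2(BT)\le\begin{cases} 4n+16b-12 & \text{if } 1\le b\le\frac{n-4}{5},\\ 6n+6b-20 & \text{if } \frac{n-4}{5}<b<\frac{n-2}{3},\\ 10n-6b-28 & \text{if } \frac{n-2}{3}\le b<\frac{3n-4}{7},\\ 16n-20b-36 & \text{if } \frac{3n-4}{7}\le b<\frac{n}{2}-1. \end{cases} \] Equality holds if and only if $BT\in\mathcal{BT}'_1(n,b)$ when $1\le b<\frac{n-2}{3}$, and $BT\in\mathcal{BT}'_2(n,b)$ when $\frac{n-2}{3}\le b<\frac{n}{2}-1$.
   Context: A chemical tree is a tree with maximum degree at most $4$; $d_v$ is the degree of $v$. A pendent vertex has degree $1$; a branching vertex has degree greater than $2$. A pendent path is a path $u_0\cdots u_r$ ($r\ge1$) with $u_0$ pendent, $u_r$ branching and all internal vertices of degree $2$; an internal path is such a path with both end vertices branching and all internal vertices of degree $2$; its length is $r$. $\mathcal{CT}^*_{n,b}$ is the class of all $n$-vertex chemical trees with exactly $b$ branching vertices. For $1\le b<\frac{n-2}{3}$, $\mathcal{BT}_1(n,b)$ is the set of trees in $\mathcal{CT}^*_{n,b}$ whose degree sequence has $b$ entries $4$, $n-3b-2$ entries $2$ and $2b+2$ entries $1$; for $\frac{n-2}{3}\le b<\frac{n}{2}-1$, $\mathcal{BT}_2(n,b)$ is the set of trees in $\mathcal{CT}^*_{n,b}$ whose degree sequence has $n-2b-2$ entries $4$,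 $3b-n+2$ entries $3$ and $n-b$ entries $1$. $\mathcal{BT}'_1(n,b)$ and $\mathcal{BT}'_2(n,b)$ are the subclasses of $\mathcal{BT}_1(n,b)$ and $\mathcal{BT}_2(n,b)$, respectively, of trees satisfying all of: (1) every internal path (if any) has length $1$; (2) if some pendent vertex is adjacent to a vertex of degree $4$, then there are no two adjacent vertices of degree $3$; (3) if some pendent vertex is adjacent to a branching vertex, then there is no pendent path of length greater than $2$; (4) every vertex of degree $3$ (if any) has at most one neighbor of degree $4$; (5) there is at least one vertex of degree $4$ and the subgraph induced by the vertices of degree $4$ is a tree. The second Zagreb index is $M_2(G)=\sum_{uv\in E(G)}d_ud_v$. *)

theory Defs
  imports Complex_Main
begin

definition simple_graph :: "'a set \<Rightarrow> 'a set set \<Rightarrow> bool" where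
  "simple_graph V E \<longleftrightarrow> finite V \<and>
     (\<forall>e\<in>E. \<exists>u v. e = {u, v} \<and> u \<noteq> v \<and> u \<in> V \<and> v \<in> V)"

definition deg :: "'a set set \<Rightarrow> 'a \<Rightarrow> nat" where
  "deg E v = card {u. {u, v} \<in> E}"

definition connected_graph :: "'a set \<Rightarrow> 'a set set \<Rightarrow> bool" where
  "connected_graph V E \<longleftrightarrow>
     (\<forall>u\<in>V. \<forall>v\<in>V. (\<lambda>x y. {x, y} \<in> E)\<^sup>*\<^sup>* u v)"

definition is_tree :: "'a set \<Rightarrow> 'a set set \<Rightarrow> bool" where
  "is_tree V E \<longleftrightarrow> simple_graph V E \<and> V \<noteq> {} \<and> connected_graph V E \<and>
     card E = card V - 1"

definition chemical_tree :: "'a set \<Rightarrow> 'a set set \<Rightarrow> bool" where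
  "chemical_tree V E \<longleftrightarrow> is_tree V E \<and> (\<forall>v\<in>V. deg E v \<le> 4)"

definition branching_vertices :: "'a set \<Rightarrow> 'a set set \<Rightarrow> 'a set" where
  "branching_vertices V E = {v\<in>V. deg E v > 2}"

definition CT_star :: "nat \<Rightarrow> nat \<Rightarrow> 'a set \<Rightarrow> 'a set set \<Rightarrow> bool" where
  "CT_star n b V E \<longleftrightarrow> chemical_tree V E \<and> card V = n \<and>
     card (branching_vertices V E) = b"

definition M2 :: "'a set set \<Rightarrow> nat" where
  "M2 E = (\<Sum>e\<in>E. \<Prod>v\<in>e. deg E v)"

definition n_deg :: "'a set \<Rightarrow> 'a set set \<Rightarrow> nat \<Rightarrow> nat" where
  "n_deg V E k = card {v\<in>V. deg E v = k}"

definition is_path :: "'a set \<Rightarrow> 'a set set \<Rightarrow> 'a list \<Rightarrow> bool" where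
  "is_path V E ps \<longleftrightarrow> length ps \<ge> 2 \<and> distinct ps \<and> set ps \<subseteq> V \<and>
     (\<forall>i. i + 1 < length ps \<longrightarrow> {ps ! i, ps ! (i + 1)} \<in> E)"

definition inner_deg2 :: "'a set set \<Rightarrow> 'a list \<Rightarrow> bool" where
  "inner_deg2 E ps \<longleftrightarrow> (\<forall>i. 0 < i \<and> i + 1 < length ps \<longrightarrow> deg E (ps ! i) = 2)"

definition pendent_path :: "'a set \<Rightarrow> 'a set set \<Rightarrow> 'a list \<Rightarrow> bool" where
  "pendent_path V E ps \<longleftrightarrow> is_path V E ps \<and> deg E (hd ps) = 1 \<and>
     deg E (last ps) > 2 \<and> inner_deg2 E ps"

definition internal_path :: "'a set \<Rightarrow> 'a set set \<Rightarrow> 'a list \<Rightarrow> bool" where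
  "internal_path V E ps \<longleftrightarrow> is_path V E ps \<and> deg E (hd ps) > 2 \<and>
     deg E (last ps) > 2 \<and> inner_deg2 E ps"

definition path_len :: "'a list \<Rightarrow> nat" where
  "path_len ps = length ps - 1"

definition BT1 :: "nat \<Rightarrow> nat \<Rightarrow> 'a set \<Rightarrow> 'a set set \<Rightarrow> bool" where
  "BT1 n b V E \<longleftrightarrow> CT_star n b V E \<and>
     int (n_deg V E 4) = int b \<and> int (n_deg V E 2) = int n - 3 * int b - 2 \<and>
     int (n_deg V E 1) = 2 * int b + 2"

definition BT2 :: "nat \<Rightarrow> nat \<Rightarrow> 'a set \<Rightarrow> 'a set set \<Rightarrow> bool" where
  "BT2 n b V E \<longleftrightarrow> CT_star n b V E \<and>
     int (n_deg V E 4) = int n - 2 * int b - 2 \<and>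
     int (n_deg V E 3) = 3 * int b - int n + 2 \<and>
     int (n_deg V E 1) = int n - int b"

definition prime_conditions :: "'a set \<Rightarrow> 'a set set \<Rightarrow> bool" where
  "prime_conditions V E \<longleftrightarrow>
     \<comment> \<open>(1)\<close>
     (\<forall>ps. internal_path V E ps \<longrightarrow> path_len ps = 1) \<and>
     \<comment> \<open>(2)\<close>
     ((\<exists>u\<in>V. \<exists>v\<in>V. {u, v} \<in> E \<and> deg E u = 1 \<and> deg E v = 4) \<longrightarrow>
        \<not> (\<exists>u\<in>V. \<exists>v\<in>V. {u, v} \<in> E \<and> deg E u = 3 \<and> deg E v = 3)) \<and>
     \<comment> \<open>(3)\<close>
     ((\<exists>u\<in>V. \<exists>v\<in>V. {u, v} \<in> E \<and> deg E u = 1 \<and> deg E v > 2) \<longrightarrow>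
        \<not> (\<exists>ps. pendent_path V E ps \<and> path_len ps > 2)) \<and>
     \<comment> \<open>(4)\<close>
     (\<forall>v\<in>V. deg E v = 3 \<longrightarrow> card {u\<in>V. {u, v} \<in> E \<and> deg E u = 4} \<le> 1) \<and>
     \<comment> \<open>(5)\<close>
     ((\<exists>v\<in>V. deg E v = 4) \<and>
        is_tree {v\<in>V. deg E v = 4} {e\<in>E. e \<subseteq> {v\<in>V. deg E v = 4}})"

definition BT1' :: "nat \<Rightarrow> nat \<Rightarrow> 'a set \<Rightarrow> 'a set set \<Rightarrow> bool" where
  "BT1' n b V E \<longleftrightarrow> BT1 n b V E \<and> prime_conditions V E"

definition BT2' :: "nat \<Rightarrow> nat \<Rightarrow> 'a set \<Rightarrow> 'a set set \<Rightarrow> bool" where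
  "BT2' n b V E \<longleftrightarrow> BT2 n b V E \<and> prime_conditions V E"

definition M2_bound :: "nat \<Rightarrow> nat \<Rightarrow> int" where
  "M2_bound n b =
    (if real b \<le> (real n - 4) / 5 then 4 * int n + 16 * int b - 12
     else if real b < (real n - 2) / 3 then 6 * int n + 6 * int b - 20
     else if real b < (3 * real n - 4) / 7 then 10 * int n - 6 * int b - 28
     else 16 * int n - 20 * int b - 36)"

end

(* Let n_k be the number of vertices of degree k and p_ij the number of ordered pairs of adjacent
   vertices of degrees i and j. Counting neighbours and edges gives linear relations between these
   numbers, and 2 M_2 is the sum of i j p_ij. The subgraph of a tree induced by any vertex set is a
   forest, so the b branching vertices span at most b - 1 edges and the n_4 vertices of degree 4 at
   most n_4 - 1. In each of the four ranges of b, the bound minus M_2 is a nonnegative combination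
   of these quantities; hence equality forces some of the counts to vanish and the two induced
   forests to be trees. Two facts about paths in trees translate this into the conditions (1)-(5):
   two adjacent vertices of degree 2 lie on a pendent or internal path of length at least 3, and no
   path leaves an induced subtree and returns to it. *)

theory Submission
  imports Defs
begin

section \<open>Simple graphs and trees\<close>

definition nbrs :: "'a set set \<Rightarrow> 'a \<Rightarrow> 'a set" where
  "nbrs E v = {u. {u, v} \<in> E}"

definition induced_edges :: "'a set set \<Rightarrow> 'a set \<Rightarrow> 'a set set" where
  "induced_edges E S = {e\<in>E. e \<subseteq> S}"

lemma deg_eq_card_nbrs: "deg E v = card (nbrs E v)"
  by (simp add: deg_def nbrs_def)

lemma mem_nbrs_iff: "u \<in> nbrs E v \<longleftrightarrow> {v, u} \<in> E"
  by (simp add: nbrs_def insert_commute)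

lemma mem_nbrs_commute: "u \<in> nbrs E v \<longleftrightarrow> v \<in> nbrs E u"
  by (simp add: nbrs_def insert_commute)

lemma simple_graph_finite: "simple_graph V E \<Longrightarrow> finite V"
  by (simp add: simple_graph_def)

lemma simple_graph_edgeE:
  assumes "simple_graph V E" and "e \<in> E"
  obtains u v where "e = {u, v}" "u \<noteq> v" "u \<in> V" "v \<in> V"
  using assms by (auto simp: simple_graph_def)

lemma simple_graph_edge_subset: "simple_graph V E \<Longrightarrow> e \<in> E \<Longrightarrow> e \<subseteq> V"
  by (auto simp: simple_graph_def)

lemma simple_graph_finite_edges:
  assumes "simple_graph V E"
  shows "finite E"
proof -
  have "E \<subseteq> Pow V" using simple_graph_edge_subset[OF assms] by blast
  then show ?thesis using simple_graph_finite[OF assms] finite_subset by blast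
qed

lemma simple_graph_adj:
  assumes "simple_graph V E" and "{u, v} \<in> E"
  shows "u \<in> V" "v \<in> V" "u \<noteq> v"
proof -
  obtain a b where "{u, v} = {a, b}" "a \<noteq> b" "a \<in> V" "b \<in> V"
    by (rule simple_graph_edgeE[OF assms])
  then show "u \<in> V" "v \<in> V" "u \<noteq> v" by (auto simp: doubleton_eq_iff)
qed

lemma nbrs_subset: "simple_graph V E \<Longrightarrow> nbrs E v \<subseteq> V"
  using simple_graph_adj by (fastforce simp: nbrs_def)

lemma finite_nbrs: "simple_graph V E \<Longrightarrow> finite (nbrs E v)"
  using finite_subset[OF nbrs_subset simple_graph_finite] .

lemma not_mem_nbrs_self:
  assumes "simple_graph V E"
  shows "v \<notin> nbrs E v"
proof
  assume "v \<in> nbrs E v"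
  then have "{v, v} \<in> E" by (simp add: nbrs_def)
  with simple_graph_adj(3)[OF assms this] show False by simp
qed

lemma edges_containing_eq_image_nbrs:
  assumes "simple_graph V E"
  shows "{e\<in>E. v \<in> e} = (\<lambda>u. {u, v}) ` nbrs E v"
proof
  show "{e\<in>E. v \<in> e} \<subseteq> (\<lambda>u. {u, v}) ` nbrs E v"
  proof
    fix e assume e: "e \<in> {e\<in>E. v \<in> e}"
    obtain a b where "e = {a, b}" using e simple_graph_edgeE[OF assms] by blast
    with e obtain u where "e = {u, v}" by (auto simp: insert_commute)
    with e show "e \<in> (\<lambda>u. {u, v}) ` nbrs E v" by (auto simp: nbrs_def)
  qed
qed (auto simp: nbrs_def)

lemma sum_edges_eq_sum_nbrs:
  fixes h :: "'a \<Rightarrow> 'a set \<Rightarrow> 'b::comm_monoid_add"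
  assumes sg: "simple_graph V E"
  shows "(\<Sum>e\<in>E. \<Sum>v\<in>e. h v e) = (\<Sum>v\<in>V. \<Sum>u\<in>nbrs E v. h v {u, v})"
proof -
  have "{v\<in>V. v \<in> e} = e" if "e \<in> E" for e
    using simple_graph_edge_subset[OF sg that] by blast
  then have "(\<Sum>e\<in>E. \<Sum>v\<in>e. h v e) = (\<Sum>e\<in>E. \<Sum>v\<in>{v\<in>V. v \<in> e}. h v e)"
    by (intro sum.cong) simp_all
  also have "\<dots> = (\<Sum>v\<in>V. \<Sum>e\<in>{e\<in>E. v \<in> e}. h v e)"
    using sum.swap_restrict[OF simple_graph_finite_edges[OF sg] simple_graph_finite[OF sg],
        of "\<lambda>e v. h v e" "\<lambda>e v. v \<in> e"] by simp
  also have "\<dots> = (\<Sum>v\<in>V. \<Sum>u\<in>nbrs E v. h v {u, v})"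
  proof (rule sum.cong)
    fix v
    have "inj_on (\<lambda>u. {u, v}) (nbrs E v)"
      by (rule inj_onI) (metis doubleton_eq_iff not_mem_nbrs_self[OF sg])
    then show "(\<Sum>e\<in>{e\<in>E. v \<in> e}. h v e) = (\<Sum>u\<in>nbrs E v. h v {u, v})"
      unfolding edges_containing_eq_image_nbrs[OF sg] by (simp add: sum.reindex)
  qed simp
  finally show ?thesis .
qed

lemma sum_deg_eq_twice_card_edges:
  assumes sg: "simple_graph V E"
  shows "(\<Sum>v\<in>V. deg E v) = 2 * card E"
proof -
  have "(\<Sum>e\<in>E. \<Sum>v\<in>e. 1) = (\<Sum>e\<in>E. 2 :: nat)"
    by (rule sum.cong) (auto elim: simple_graph_edgeE[OF sg])
  then show ?thesis
    using sum_edges_eq_sum_nbrs[OF sg, of "\<lambda>_ _. 1 :: nat"] by (simp add: deg_eq_card_nbrs)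
qed

lemma simple_graph_induced:
  "simple_graph V E \<Longrightarrow> S \<subseteq> V \<Longrightarrow> simple_graph S (induced_edges E S)"
  unfolding simple_graph_def induced_edges_def using finite_subset by fastforce

lemma nbrs_induced_edges: "v \<in> S \<Longrightarrow> nbrs (induced_edges E S) v = nbrs E v \<inter> S"
  by (auto simp: nbrs_def induced_edges_def)

lemma card_induced_edges:
  assumes "simple_graph V E" and "S \<subseteq> V"
  shows "2 * card (induced_edges E S) = (\<Sum>v\<in>S. card (nbrs E v \<inter> S))"
  using sum_deg_eq_twice_card_edges[OF simple_graph_induced[OF assms]]
  by (simp add: deg_eq_card_nbrs nbrs_induced_edges)

lemma nbrs_eq_if_card_eq_deg:
  assumes "simple_graph V E" and "deg E x = card A" and "A \<subseteq> nbrs E x" and "finite A"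
  shows "nbrs E x = A"
  using card_subset_eq[OF finite_nbrs[OF assms(1)] assms(3)] assms(2) by (simp add: deg_eq_card_nbrs)

lemma nbrs_leaf:
  assumes "simple_graph V E" and "deg E x = 1" and "{x, y} \<in> E"
  shows "nbrs E x = {y}"
  using nbrs_eq_if_card_eq_deg[OF assms(1), of x "{y}"] assms(2,3) by (simp add: mem_nbrs_iff)

lemma nbrs_deg2:
  assumes "simple_graph V E" and "deg E x = 2" and "{x, a} \<in> E" "{x, c} \<in> E" "a \<noteq> c"
  shows "nbrs E x = {a, c}"
  using nbrs_eq_if_card_eq_deg[OF assms(1), of x "{a, c}"] assms(2-) by (simp add: mem_nbrs_iff)

lemma tree_simple_graph: "is_tree V E \<Longrightarrow> simple_graph V E"
  by (simp add: is_tree_def)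

lemma tree_reachable:
  "is_tree V E \<Longrightarrow> u \<in> V \<Longrightarrow> v \<in> V \<Longrightarrow> (\<lambda>x y. {x, y} \<in> E)\<^sup>*\<^sup>* u v"
  by (simp add: is_tree_def connected_graph_def)

lemma tree_closed_subset_eq:
  assumes t: "is_tree V E" and "S \<subseteq> V" "x \<in> S"
    and closed: "\<And>y z. y \<in> S \<Longrightarrow> {y, z} \<in> E \<Longrightarrow> z \<in> S"
  shows "S = V"
proof -
  have "w \<in> S" if "w \<in> V" for w
  proof -
    have "(\<lambda>x y. {x, y} \<in> E)\<^sup>*\<^sup>* x w"
      using tree_reachable[OF t _ that] assms(2,3) by blast
    then show ?thesis by (induction rule: rtranclp_induct) (use closed \<open>x \<in> S\<close> in auto)
  qed
  with \<open>S \<subseteq> V\<close> show ?thesis by blast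
qed

lemma tree_deg_pos:
  assumes t: "is_tree V E" and "v \<in> V" "w \<in> V" "w \<noteq> v"
  shows "deg E v \<ge> 1"
proof -
  obtain u where "{v, u} \<in> E"
    using tree_reachable[OF t \<open>v \<in> V\<close> \<open>w \<in> V\<close>] \<open>w \<noteq> v\<close>
    by (cases rule: converse_rtranclpE) auto
  then have "nbrs E v \<noteq> {}" by (auto simp: mem_nbrs_iff)
  then show ?thesis
    using finite_nbrs[OF tree_simple_graph[OF t]] by (simp add: deg_eq_card_nbrs Suc_le_eq card_gt_0_iff)
qed

lemma tree_card_edges: "is_tree V E \<Longrightarrow> card E = card V - 1"
  by (simp add: is_tree_def)

lemma tree_has_leaf:
  assumes t: "is_tree V E" and "card V \<ge> 2"
  obtains l where "l \<in> V" "deg E l = 1"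
proof (rule ccontr)
  assume no_leaf: "\<not> thesis"
  note leaf = that
  have sg: "simple_graph V E" using tree_simple_graph[OF t] .
  have "deg E v \<ge> 2" if "v \<in> V" for v
  proof -
    have "card (V - {v}) \<noteq> 0" using \<open>card V \<ge> 2\<close> \<open>v \<in> V\<close> by simp
    then have "V - {v} \<noteq> {}" by (metis card.empty)
    then obtain w where "w \<in> V" "w \<noteq> v" by blast
    then have "deg E v \<ge> 1" using tree_deg_pos[OF t \<open>v \<in> V\<close>] by blast
    moreover have "deg E v \<noteq> 1" using leaf no_leaf \<open>v \<in> V\<close> by blast
    ultimately show ?thesis by linarith
  qed
  then have "2 * card V \<le> 2 * card E"
    using sum_mono[of V "\<lambda>_. 2" "deg E"] sum_deg_eq_twice_card_edges[OF sg] by (simp add: mult.commute)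
  with tree_card_edges[OF t] \<open>card V \<ge> 2\<close> show False by linarith
qed

lemma edges_at_leaf:
  assumes sg: "simple_graph V E" and "deg E l = 1" and "{l, p} \<in> E"
  shows "E = insert {l, p} {e\<in>E. l \<notin> e}"
proof -
  have "e = {l, p}" if "e \<in> E" "l \<in> e" for e
  proof -
    obtain a b where "e = {a, b}" using simple_graph_edgeE[OF sg \<open>e \<in> E\<close>] by blast
    with \<open>l \<in> e\<close> obtain u where u: "e = {l, u}" by (auto simp: insert_commute)
    with \<open>e \<in> E\<close> have "u \<in> nbrs E l" by (simp add: mem_nbrs_iff)
    with u show ?thesis using nbrs_leaf[OF assms] by simp
  qed
  with assms(3) show ?thesis by blast
qed

text \<open>Walks in a tree between vertices other than a leaf \<open>l\<close> never need \<open>l\<close>: a walk entering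
  \<open>l\<close> must come from, and leave to, the unique neighbour \<open>p\<close> of \<open>l\<close>.\<close>

lemma reachable_avoiding_leaf:
  assumes t: "is_tree V E" and l: "deg E l = 1" "{l, p} \<in> E" and u: "u \<in> V - {l}" and w: "w \<in> V - {l}"
  shows "(\<lambda>x y. {x, y} \<in> {e\<in>E. l \<notin> e})\<^sup>*\<^sup>* u w"
proof -
  let ?R = "\<lambda>x y. {x, y} \<in> {e\<in>E. l \<notin> e}"
  have nbrs_l: "nbrs E l = {p}" using nbrs_leaf[OF tree_simple_graph[OF t] l] .
  have walk: "(x \<noteq> l \<longrightarrow> ?R\<^sup>*\<^sup>* u x) \<and> (x = l \<longrightarrow> ?R\<^sup>*\<^sup>* u p)"
    if "(\<lambda>x y. {x, y} \<in> E)\<^sup>*\<^sup>* u x" for x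
    using that
  proof (induction rule: rtranclp_induct)
    case base
    then show ?case using u by auto
  next
    case (step y z)
    consider "z = l" | "y = l" | "y \<noteq> l" "z \<noteq> l" by blast
    then show ?case
    proof cases
      case 1
      then have "y \<in> nbrs E l" using step(2) by (simp add: nbrs_def)
      then have "y = p" using nbrs_l by simp
      with 1 step(3) show ?thesis using simple_graph_adj(3)[OF tree_simple_graph[OF t] l(2)] by auto
    next
      case 2
      then have "z \<in> nbrs E l" using step(2) by (simp add: mem_nbrs_iff)
      then have "z = p" using nbrs_l by simp
      with 2 step(3) show ?thesis by auto
    next
      case 3
      then have "?R y z" using step(2) by simp
      then show ?thesis using step(3) 3 rtranclp.rtrancl_into_rtrancl[of ?R u y z] by simp
    qed
  qed
  have "(\<lambda>x y. {x, y} \<in> E)\<^sup>*\<^sup>* u w" using tree_reachable[OF t] u w by blast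
  then show ?thesis using walk w by blast
qed

lemma tree_remove_leaf:
  assumes t: "is_tree V E" and "deg E l = 1" "{l, p} \<in> E"
  shows "is_tree (V - {l}) {e\<in>E. l \<notin> e}"
proof -
  have sg: "simple_graph V E" using tree_simple_graph[OF t] .
  have "l \<in> V" "p \<in> V" "l \<noteq> p" using simple_graph_adj[OF sg \<open>{l, p} \<in> E\<close>] by auto
  have "finite {e\<in>E. l \<notin> e}" "{l, p} \<notin> {e\<in>E. l \<notin> e}"
    using simple_graph_finite_edges[OF sg] by simp_all
  then have "card {e\<in>E. l \<notin> e} = card E - 1"
    using edges_at_leaf[OF sg assms(2,3)] card_insert_disjoint by (metis diff_Suc_1)
  moreover have "card (V - {l}) = card V - 1" using \<open>l \<in> V\<close> by simp
  moreover have "simple_graph (V - {l}) {e\<in>E. l \<notin> e}"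
    using sg unfolding simple_graph_def by fastforce
  moreover have "connected_graph (V - {l}) {e\<in>E. l \<notin> e}"
    unfolding connected_graph_def using reachable_avoiding_leaf[OF t assms(2,3)] by blast
  ultimately show ?thesis
    using t \<open>p \<in> V\<close> \<open>l \<noteq> p\<close> by (auto simp: is_tree_def)
qed

lemma induced_edges_singleton: "simple_graph V E \<Longrightarrow> induced_edges E {x} = {}"
  by (auto simp: induced_edges_def elim!: simple_graph_edgeE)

lemma induced_edges_insert_pendant:
  assumes "E = insert {l, p} E'" "\<forall>e\<in>E'. l \<notin> e" "l \<notin> S" "l \<noteq> p"
  shows "induced_edges E (insert l S) = induced_edges E' S \<union> (if p \<in> S then {{l, p}} else {})"
  using assms by (auto simp: induced_edges_def)

lemma connected_graph_insert_pendant: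
  assumes "connected_graph S F'" "F' \<subseteq> F" "p \<in> S" "{l, p} \<in> F"
  shows "connected_graph (insert l S) F"
proof -
  let ?R = "\<lambda>x y. {x, y} \<in> F"
  have to_p: "?R\<^sup>*\<^sup>* x p" if "x \<in> insert l S" for x
  proof (cases "x = l")
    case True
    then show ?thesis using assms(4) by (simp add: r_into_rtranclp)
  next
    case False
    then have "(\<lambda>x y. {x, y} \<in> F')\<^sup>*\<^sup>* x p" using assms(1,3) that by (simp add: connected_graph_def)
    then show ?thesis using mono_rtranclp[of "\<lambda>x y. {x, y} \<in> F'" ?R] assms(2) by blast
  qed
  have "symp ?R" by (simp add: symp_def insert_commute)
  then have "?R\<^sup>*\<^sup>* p x" if "x \<in> insert l S" for x
    using to_p[OF that] by (meson symp_rtranclp sympD)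
  then show ?thesis unfolding connected_graph_def using to_p by (meson rtranclp_trans)
qed

lemma induced_forest_insert_pendant:
  assumes E: "E = insert {l, p} E'" and l: "\<forall>e\<in>E'. l \<notin> e" "l \<notin> S" "l \<noteq> p"
    and fin: "finite E'" "finite S"
    and IH: "card (induced_edges E' S) < card S \<and>
      (card (induced_edges E' S) + 1 = card S \<longrightarrow> connected_graph S (induced_edges E' S))"
  shows "card (induced_edges E (insert l S)) < card (insert l S) \<and>
    (card (induced_edges E (insert l S)) + 1 = card (insert l S) \<longrightarrow>
      connected_graph (insert l S) (induced_edges E (insert l S)))"
proof -
  have split: "induced_edges E (insert l S) = induced_edges E' S \<union> (if p \<in> S then {{l, p}} else {})"
    by (rule induced_edges_insert_pendant[OF E l])
  have "{l, p} \<notin> induced_edges E' S" using l(1) by (auto simp: induced_edges_def)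
  moreover have "finite (induced_edges E' S)" using fin(1) by (simp add: induced_edges_def)
  ultimately have card_split:
    "card (induced_edges E (insert l S)) = card (induced_edges E' S) + (if p \<in> S then 1 else 0)"
    unfolding split by simp
  have card_S: "card (insert l S) = card S + 1" using fin(2) l(2) by simp
  have "connected_graph (insert l S) (induced_edges E (insert l S))"
    if "card (induced_edges E (insert l S)) + 1 = card (insert l S)"
  proof -
    have "p \<in> S" "card (induced_edges E' S) + 1 = card S"
      using that IH card_split card_S by (auto split: if_splits)
    then show ?thesis using IH split by (intro connected_graph_insert_pendant) auto
  qed
  then show ?thesis using IH card_split card_S by auto
qed

lemma tree_induced_subgraph:
  assumes "is_tree V E" "S \<subseteq> V" "S \<noteq> {}"
  shows "card (induced_edges E S) < card S \<and>
    (card (induced_edges E S) + 1 = card S \<longrightarrow> connected_graph S (induced_edges E S))"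
  using assms
proof (induction "card V" arbitrary: V E S)
  case 0
  then show ?case by (simp add: is_tree_def simple_graph_def)
next
  case (Suc N)
  have t: "is_tree V E" by fact
  have sg: "simple_graph V E" using tree_simple_graph[OF t] .
  show ?case
  proof (cases "card V = 1")
    case True
    then obtain x where "V = {x}" by (rule card_1_singletonE)
    then have "S = {x}" using Suc.prems by auto
    then show ?thesis using induced_edges_singleton[OF sg] by (simp add: connected_graph_def)
  next
    case False
    have "card V \<ge> 2" using False Suc.hyps(2) by linarith
    then obtain l where l: "l \<in> V" "deg E l = 1" using tree_has_leaf[OF t] by blast
    then obtain p where lp: "{l, p} \<in> E"
      by (metis One_nat_def card_1_singletonE deg_eq_card_nbrs mem_nbrs_iff singletonI)
    have "l \<noteq> p" using simple_graph_adj[OF sg lp] by simp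
    define E' where "E' = {e\<in>E. l \<notin> e}"
    have t': "is_tree (V - {l}) E'" unfolding E'_def by (rule tree_remove_leaf[OF t l(2) lp])
    have E: "E = insert {l, p} E'" unfolding E'_def by (rule edges_at_leaf[OF sg l(2) lp])
    have N: "N = card (V - {l})" using Suc.hyps(2) l(1) by simp
    consider "l \<notin> S" | "S = {l}" | "l \<in> S" "S \<noteq> {l}" by blast
    then show ?thesis
    proof cases
      case 1
      then have "induced_edges E S = induced_edges E' S" by (auto simp: induced_edges_def E'_def)
      then show ?thesis using Suc.hyps(1)[OF N t'] Suc.prems 1 by auto
    next
      case 2
      then show ?thesis using induced_edges_singleton[OF sg] by (simp add: connected_graph_def)
    next
      case 3
      define S' where "S' = S - {l}"
      have S: "S = insert l S'" "l \<notin> S'" "S' \<subseteq> V - {l}" "S' \<noteq> {}"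
        using 3 Suc.prems(2) by (auto simp: S'_def)
      have "\<forall>e\<in>E'. l \<notin> e" "finite E'"
        using simple_graph_finite_edges[OF sg] by (simp_all add: E'_def)
      moreover have "finite S'"
        by (rule finite_subset[OF S(3)]) (simp add: simple_graph_finite[OF sg])
      ultimately show ?thesis unfolding S(1)
        using induced_forest_insert_pendant[OF E _ S(2) \<open>l \<noteq> p\<close>] Suc.hyps(1)[OF N t' S(3,4)] by blast
    qed
  qed
qed

lemma card_induced_edges_less:
  assumes "is_tree V E" "S \<subseteq> V" "S \<noteq> {}"
  shows "card (induced_edges E S) < card S"
  using tree_induced_subgraph[OF assms] by simp

lemma induced_subtree:
  assumes t: "is_tree V E" and S: "S \<subseteq> V" "S \<noteq> {}" and card: "card (induced_edges E S) + 1 = card S"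
  shows "is_tree S (induced_edges E S)"
proof -
  have "connected_graph S (induced_edges E S)" using tree_induced_subgraph[OF t S] card by simp
  then show ?thesis
    using simple_graph_induced[OF tree_simple_graph[OF t] S(1)] S(2) card by (simp add: is_tree_def)
qed

section \<open>Paths in trees\<close>

lemma is_path_edge: "is_path V E ps \<Longrightarrow> i + 1 < length ps \<Longrightarrow> {ps ! i, ps ! (i + 1)} \<in> E"
  by (simp add: is_path_def)

lemma is_path_rev:
  assumes "is_path V E ps"
  shows "is_path V E (rev ps)"
proof -
  let ?L = "length ps"
  have "{rev ps ! i, rev ps ! (i + 1)} \<in> E" if i: "i + 1 < ?L" for i
  proof -
    have "{ps ! (?L - 2 - i), ps ! (?L - 2 - i + 1)} \<in> E"
      using is_path_edge[OF assms, of "?L - 2 - i"] i by simp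
    moreover have "rev ps ! i = ps ! (?L - 2 - i + 1)" "rev ps ! (i + 1) = ps ! (?L - 2 - i)"
      using i by (simp_all add: rev_nth Suc_diff_Suc)
    ultimately show ?thesis by (simp add: insert_commute)
  qed
  then show ?thesis using assms unfolding is_path_def by simp
qed

lemma inner_deg2_rev:
  assumes "inner_deg2 E ps"
  shows "inner_deg2 E (rev ps)"
  unfolding inner_deg2_def
proof (intro allI impI)
  fix i assume i: "0 < i \<and> i + 1 < length (rev ps)"
  then have "0 < length ps - Suc i \<and> length ps - Suc i + 1 < length ps" by auto
  then show "deg E (rev ps ! i) = 2" using assms i by (simp add: inner_deg2_def rev_nth)
qed

lemma is_path_Cons:
  assumes p: "is_path V E ps" and "z \<in> V" "z \<notin> set ps" and "{z, hd ps} \<in> E"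
  shows "is_path V E (z # ps)"
proof -
  have "ps \<noteq> []" using p by (auto simp: is_path_def)
  have "{(z # ps) ! i, (z # ps) ! (i + 1)} \<in> E" if "i + 1 < length (z # ps)" for i
  proof (cases i)
    case 0
    then show ?thesis using assms(4) \<open>ps \<noteq> []\<close> by (simp add: hd_conv_nth)
  next
    case (Suc j)
    then show ?thesis using is_path_edge[OF p, of j] that by simp
  qed
  then show ?thesis using assms unfolding is_path_def by auto
qed

lemma inner_deg2_Cons:
  assumes "inner_deg2 E ps" "ps \<noteq> []" "deg E (hd ps) = 2"
  shows "inner_deg2 E (z # ps)"
  unfolding inner_deg2_def
proof (intro allI impI)
  fix i assume i: "0 < i \<and> i + 1 < length (z # ps)"
  then obtain j where j: "i = Suc j" by (cases i) auto
  show "deg E ((z # ps) ! i) = 2"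
  proof (cases j)
    case 0
    then show ?thesis using j assms by (simp add: hd_conv_nth)
  next
    case (Suc k)
    then show ?thesis using j i assms(1) unfolding inner_deg2_def by auto
  qed
qed

lemma is_path_take:
  "is_path V E ps \<Longrightarrow> 2 \<le> k \<Longrightarrow> k \<le> length ps \<Longrightarrow> is_path V E (take k ps)"
  unfolding is_path_def by (auto dest: in_set_takeD)

lemma is_path_3:
  assumes sg: "simple_graph V E" and "a \<in> nbrs E x" "c \<in> nbrs E x" "a \<noteq> c"
  shows "is_path V E [a, x, c]"
proof -
  have "a \<noteq> x" "c \<noteq> x" using assms(2,3) not_mem_nbrs_self[OF sg] by auto
  moreover have "a \<in> V" "c \<in> V" "x \<in> V"
    using assms(2,3) simple_graph_adj[OF sg] by (auto simp: nbrs_def)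
  moreover have "{[a, x, c] ! i, [a, x, c] ! (i + 1)} \<in> E" if "i + 1 < length [a, x, c]" for i
  proof -
    have "i = 0 \<or> i = 1" using that by auto
    then show ?thesis using assms(2,3) by (auto simp: nbrs_def insert_commute)
  qed
  ultimately show ?thesis using \<open>a \<noteq> c\<close> unfolding is_path_def by auto
qed

lemma inner_deg2_3: "deg E x = 2 \<Longrightarrow> inner_deg2 E [a, x, c]"
  unfolding inner_deg2_def by (auto simp: nth_Cons')

definition path_edges :: "'a list \<Rightarrow> 'a set set" where
  "path_edges ps = (\<lambda>i. {ps ! i, ps ! (i + 1)}) ` {..<length ps - 1}"

lemma card_path_edges:
  assumes "distinct ps"
  shows "card (path_edges ps) = length ps - 1"
proof -
  have "i = j" if "i < length ps - 1" "j < length ps - 1" "{ps ! i, ps ! (i + 1)} = {ps ! j, ps ! (j + 1)}" for i j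
    using that assms by (auto simp: doubleton_eq_iff nth_eq_iff_index_eq)
  then have "inj_on (\<lambda>i. {ps ! i, ps ! (i + 1)}) {..<length ps - 1}" by (intro inj_onI) auto
  then show ?thesis by (simp add: path_edges_def card_image)
qed

lemma path_edges_subset: "is_path V E ps \<Longrightarrow> path_edges ps \<subseteq> induced_edges E (set ps)"
  by (auto simp: path_edges_def induced_edges_def is_path_def)

lemma set_path_inter_eq_ends:
  assumes "ps \<noteq> []" "hd ps \<in> S" "last ps \<in> S"
    and inner: "\<And>i. 0 < i \<Longrightarrow> i + 1 < length ps \<Longrightarrow> ps ! i \<notin> S"
  shows "S \<inter> set ps = {hd ps, last ps}"
proof
  show "S \<inter> set ps \<subseteq> {hd ps, last ps}"
  proof
    fix x assume x: "x \<in> S \<inter> set ps"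
    then obtain i where "i < length ps" "x = ps ! i" by (auto simp: in_set_conv_nth)
    with inner x have "\<not> (0 < i \<and> i + 1 < length ps)" by blast
    with \<open>i < length ps\<close> have "i = 0 \<or> i = length ps - 1" by linarith
    with \<open>x = ps ! i\<close> \<open>ps \<noteq> []\<close> show "x \<in> {hd ps, last ps}" by (auto simp: hd_conv_nth last_conv_nth)
  qed
  show "{hd ps, last ps} \<subseteq> S \<inter> set ps" using assms(1-3) hd_in_set last_in_set by auto
qed

text \<open>Together with the subtree on \<open>S\<close>, such a path would give \<open>S \<union> set ps\<close> as many induced edges
  as vertices.\<close>

lemma subtree_no_detour:
  assumes t: "is_tree V E" and "S \<subseteq> V" and subtree: "card (induced_edges E S) + 1 = card S"
    and p: "is_path V E ps" "length ps \<ge> 3" and ends: "hd ps \<in> S" "last ps \<in> S"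
    and inner: "\<And>i. 0 < i \<Longrightarrow> i + 1 < length ps \<Longrightarrow> ps ! i \<notin> S"
  shows False
proof -
  let ?L = "length ps" and ?T = "S \<union> set ps"
  have sg: "simple_graph V E" using tree_simple_graph[OF t] .
  have dist: "distinct ps" and "set ps \<subseteq> V" using p by (auto simp: is_path_def)
  have "finite S" using \<open>S \<subseteq> V\<close> simple_graph_finite[OF sg] finite_subset by blast
  have "ps \<noteq> []" using p(2) by auto
  then have "S \<inter> set ps = {hd ps, last ps}" by (rule set_path_inter_eq_ends[OF _ ends inner])
  moreover have "hd ps \<noteq> last ps"
    using nth_eq_iff_index_eq[OF dist, of 0 "?L - 1"] p(2) \<open>ps \<noteq> []\<close> by (simp add: hd_conv_nth last_conv_nth)
  ultimately have card_T: "card ?T + 2 = card S + ?L"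
    using card_Un_Int[OF \<open>finite S\<close> finite_set[of ps]] distinct_card[OF dist] by simp
  have disj: "induced_edges E S \<inter> path_edges ps = {}"
  proof -
    have "ps ! i \<notin> S \<or> ps ! (i + 1) \<notin> S" if "i < ?L - 1" for i
      using inner[of i] inner[of "i + 1"] that p(2) by (cases i) auto
    then show ?thesis by (auto simp: path_edges_def induced_edges_def)
  qed
  have sub: "induced_edges E S \<union> path_edges ps \<subseteq> induced_edges E ?T"
    using path_edges_subset[OF p(1)] by (auto simp: induced_edges_def)
  have fin_T: "finite (induced_edges E ?T)"
    using simple_graph_finite_edges[OF sg] by (simp add: induced_edges_def)
  then have "finite (induced_edges E S \<union> path_edges ps)" using finite_subset[OF sub] by blast
  then have "card (induced_edges E S) + card (path_edges ps) = card (induced_edges E S \<union> path_edges ps)"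
    using disj by (simp add: card_Un_disjoint)
  also have "\<dots> \<le> card (induced_edges E ?T)" using card_mono[OF fin_T sub] .
  finally have "card (induced_edges E S) + card (path_edges ps) \<le> card (induced_edges E ?T)" .
  moreover have "card (path_edges ps) + 1 = ?L" using card_path_edges[OF dist] p(2) by simp
  moreover have "card (induced_edges E ?T) < card ?T"
    by (rule card_induced_edges_less[OF t]) (use \<open>S \<subseteq> V\<close> \<open>set ps \<subseteq> V\<close> ends in auto)
  ultimately show False using card_T subtree p(2) by linarith
qed

lemma induced_edges_edge:
  assumes sg: "simple_graph V E" and "{a, b} \<in> E"
  shows "induced_edges E {a, b} = {{a, b}}"
proof -
  have "e = {a, b}" if e: "e \<in> E" "e \<subseteq> {a, b}" for e
  proof -
    obtain x y where "e = {x, y}" "x \<noteq> y" "x \<in> V" "y \<in> V" by (rule simple_graph_edgeE[OF sg e(1)])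
    with e(2) show ?thesis by auto
  qed
  then show ?thesis using assms(2) by (auto simp: induced_edges_def)
qed

lemma tree_no_cycle:
  assumes t: "is_tree V E" and p: "is_path V E ps" "length ps \<ge> 3" and e: "{hd ps, last ps} \<in> E"
  shows False
proof (rule subtree_no_detour[OF t _ _ p])
  have sg: "simple_graph V E" using tree_simple_graph[OF t] .
  show "{hd ps, last ps} \<subseteq> V" using simple_graph_adj[OF sg e] by simp
  show "card (induced_edges E {hd ps, last ps}) + 1 = card {hd ps, last ps}"
    using induced_edges_edge[OF sg e] simple_graph_adj(3)[OF sg e] by simp
  have "ps \<noteq> []" "distinct ps" using p by (auto simp: is_path_def)
  then show "ps ! i \<notin> {hd ps, last ps}" if "0 < i" "i + 1 < length ps" for i
    using that by (auto simp: hd_conv_nth last_conv_nth nth_eq_iff_index_eq)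
qed auto

lemma subtree_no_common_outside_nbr:
  assumes t: "is_tree V E" and "S \<subseteq> V" and "card (induced_edges E S) + 1 = card S"
    and "x \<notin> S" and "a \<in> nbrs E x" "a \<in> S" and "c \<in> nbrs E x" "c \<in> S" and "a \<noteq> c"
  shows False
proof -
  have "is_path V E [a, x, c]" using is_path_3[OF tree_simple_graph[OF t]] assms(5,7,9) by blast
  then show False by (rule subtree_no_detour[OF t assms(2,3)]) (use assms(4-) in \<open>auto simp: nth_Cons'\<close>)
qed

lemma deg2_not_between_leaves:
  assumes t: "is_tree V E" and w: "w \<in> V" "deg E w > 2" and "deg E x = 2"
    and "a \<in> nbrs E x" "c \<in> nbrs E x" "a \<noteq> c" and "deg E a = 1" "deg E c = 1"
  shows False
proof -
  have sg: "simple_graph V E" using tree_simple_graph[OF t] .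
  have e: "{x, a} \<in> E" "{x, c} \<in> E" using assms(5,6) by (simp_all add: mem_nbrs_iff)
  have e': "{a, x} \<in> E" "{c, x} \<in> E" using assms(5,6) by (simp_all add: nbrs_def)
  have nbrs: "nbrs E x = {a, c}" "nbrs E a = {x}" "nbrs E c = {x}"
    using nbrs_deg2[OF sg \<open>deg E x = 2\<close> e \<open>a \<noteq> c\<close>] nbrs_leaf[OF sg \<open>deg E a = 1\<close> e'(1)]
      nbrs_leaf[OF sg \<open>deg E c = 1\<close> e'(2)] by simp_all
  have "{a, x, c} \<subseteq> V" using e simple_graph_adj[OF sg] by blast
  then have "{a, x, c} = V"
  proof (rule tree_closed_subset_eq[OF t])
    show "a \<in> {a, x, c}" by simp
    fix y z assume "y \<in> {a, x, c}" "{y, z} \<in> E"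
    then have "z \<in> nbrs E y" by (simp add: mem_nbrs_iff)
    with \<open>y \<in> {a, x, c}\<close> nbrs show "z \<in> {a, x, c}" by auto
  qed
  with w show False using assms(4,8,9) by auto
qed

lemma obtain_other_nbr:
  assumes "deg E x = 2" "y \<in> nbrs E x"
  obtains z where "z \<in> nbrs E x" "z \<noteq> y"
proof -
  have "nbrs E x \<noteq> {y}" using assms(1) by (auto simp: deg_eq_card_nbrs)
  with assms(2) show thesis using that by blast
qed

lemma deg2_edge_path4:
  assumes t: "is_tree V E" and uv: "{u, v} \<in> E" and "deg E u = 2" "deg E v = 2"
  obtains x y where "is_path V E [x, u, v, y]" "inner_deg2 E [x, u, v, y]"
proof -
  have sg: "simple_graph V E" using tree_simple_graph[OF t] .
  have "v \<in> nbrs E u" using uv by (simp add: mem_nbrs_iff)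
  have "u \<in> nbrs E v" using uv by (simp add: nbrs_def)
  obtain x where x: "x \<in> nbrs E u" "x \<noteq> v" using obtain_other_nbr[OF \<open>deg E u = 2\<close> \<open>v \<in> nbrs E u\<close>] .
  obtain y where y: "y \<in> nbrs E v" "y \<noteq> u" using obtain_other_nbr[OF \<open>deg E v = 2\<close> \<open>u \<in> nbrs E v\<close>] .
  have uvy: "is_path V E [u, v, y]" using is_path_3[OF sg \<open>u \<in> nbrs E v\<close> y(1) y(2)[THEN not_sym]] .
  have "x \<notin> set [u, v, y]"
  proof -
    have "x \<noteq> u" using x(1) not_mem_nbrs_self[OF sg] by blast
    moreover have "x \<noteq> y"
    proof
      assume "x = y"
      then have "{hd [u, v, y], last [u, v, y]} \<in> E" using x(1) by (simp add: mem_nbrs_iff)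
      then show False using tree_no_cycle[OF t uvy] by simp
    qed
    ultimately show ?thesis using x(2) by simp
  qed
  moreover have "x \<in> V" using x(1) nbrs_subset[OF sg] by blast
  moreover have "{x, hd [u, v, y]} \<in> E" using x(1) by (simp add: nbrs_def)
  ultimately have "is_path V E [x, u, v, y]" using is_path_Cons[OF uvy] by simp
  moreover have "inner_deg2 E [x, u, v, y]"
    using inner_deg2_Cons[OF inner_deg2_3[OF \<open>deg E v = 2\<close>]] \<open>deg E u = 2\<close> by simp
  ultimately show thesis by (rule that)
qed

text \<open>Otherwise the path could be prolonged, unless the other neighbour of its end lies on it and
  closes a cycle.\<close>

lemma maximal_deg2_path_end:
  assumes t: "is_tree V E" and p: "is_path V E ps" "inner_deg2 E ps" "length ps \<ge> 4"
    and max: "\<forall>qs. is_path V E qs \<and> inner_deg2 E qs \<and> length qs \<ge> 4 \<longrightarrow> length qs \<le> length ps"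
  shows "deg E (hd ps) \<noteq> 2"
proof
  assume deg: "deg E (hd ps) = 2"
  have sg: "simple_graph V E" using tree_simple_graph[OF t] .
  have "ps \<noteq> []" using p(3) by auto
  then have hd: "hd ps = ps ! 0" by (simp add: hd_conv_nth)
  have "{ps ! 0, ps ! 1} \<in> E" using is_path_edge[OF p(1), of 0] p(3) by simp
  then have "ps ! 1 \<in> nbrs E (hd ps)" by (simp add: hd mem_nbrs_iff)
  then obtain z where z: "z \<in> nbrs E (hd ps)" "z \<noteq> ps ! 1" using obtain_other_nbr[OF deg] by blast
  have "z \<in> V" using z(1) nbrs_subset[OF sg] by blast
  have "z \<noteq> hd ps" using z(1) not_mem_nbrs_self[OF sg] by blast
  have "{z, hd ps} \<in> E" using z(1) by (simp add: nbrs_def)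
  show False
  proof (cases "z \<in> set ps")
    case False
    have "is_path V E (z # ps)" by (rule is_path_Cons[OF p(1) \<open>z \<in> V\<close> False \<open>{z, hd ps} \<in> E\<close>])
    moreover have "inner_deg2 E (z # ps)" by (rule inner_deg2_Cons[OF p(2) \<open>ps \<noteq> []\<close> deg])
    ultimately show False using max[rule_format, of "z # ps"] p(3) by simp
  next
    case True
    then obtain j where j: "j < length ps" "z = ps ! j" by (auto simp: in_set_conv_nth)
    then have "j \<ge> 2" using \<open>z \<noteq> hd ps\<close> z(2) hd by (cases j; cases "j - 1") auto
    let ?q = "take (j + 1) ps"
    have path_q: "is_path V E ?q" by (rule is_path_take[OF p(1)]) (use j \<open>j \<ge> 2\<close> in auto)
    have len_q: "length ?q \<ge> 3" using j \<open>j \<ge> 2\<close> by simp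
    have "?q \<noteq> []" using \<open>ps \<noteq> []\<close> by simp
    moreover have "length ?q = Suc j" using j by simp
    ultimately have "last ?q = z" using j by (simp add: last_conv_nth)
    then have "{hd ?q, last ?q} \<in> E" using \<open>{z, hd ps} \<in> E\<close> by (simp add: insert_commute)
    then show False by (rule tree_no_cycle[OF t path_q len_q])
  qed
qed

lemma nbrs_on_leaf_path:
  assumes sg: "simple_graph V E" and p: "is_path V E ps" "inner_deg2 E ps"
    and ends: "deg E (hd ps) = 1" "deg E (last ps) = 1" and "i < length ps"
  shows "nbrs E (ps ! i) \<subseteq> set ps"
proof -
  let ?L = "length ps"
  have dist: "distinct ps" and L: "?L \<ge> 2" using p by (auto simp: is_path_def)
  have "ps \<noteq> []" using L by auto
  then have hd: "hd ps = ps ! 0" "last ps = ps ! (?L - 1)" by (simp_all add: hd_conv_nth last_conv_nth)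
  consider "i = 0" | "i = ?L - 1" | "0 < i" "i + 1 < ?L" using \<open>i < ?L\<close> by linarith
  then show ?thesis
  proof cases
    case 1
    have "deg E (ps ! 0) = 1" using ends(1) hd(1) by simp
    moreover have "{ps ! 0, ps ! 1} \<in> E" using is_path_edge[OF p(1), of 0] L by simp
    ultimately have "nbrs E (ps ! 0) = {ps ! 1}" by (rule nbrs_leaf[OF sg])
    then show ?thesis using 1 L by simp
  next
    case 2
    have "deg E (ps ! (?L - 1)) = 1" using ends(2) hd(2) by simp
    moreover have "?L - 2 + 1 = ?L - 1" using L by simp
    then have "{ps ! (?L - 1), ps ! (?L - 2)} \<in> E"
      using is_path_edge[OF p(1), of "?L - 2"] L by (simp add: insert_commute)
    ultimately have "nbrs E (ps ! (?L - 1)) = {ps ! (?L - 2)}" by (rule nbrs_leaf[OF sg])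
    then show ?thesis using 2 L by simp
  next
    case 3
    have deg: "deg E (ps ! i) = 2" using p(2) 3 by (simp add: inner_deg2_def)
    have e: "{ps ! i, ps ! (i - 1)} \<in> E" "{ps ! i, ps ! (i + 1)} \<in> E"
      using is_path_edge[OF p(1), of "i - 1"] is_path_edge[OF p(1), of i] 3
      by (simp_all add: insert_commute)
    have "ps ! (i - 1) \<noteq> ps ! (i + 1)" using dist 3 by (simp add: nth_eq_iff_index_eq)
    then have "nbrs E (ps ! i) = {ps ! (i - 1), ps ! (i + 1)}" by (rule nbrs_deg2[OF sg deg e])
    then show ?thesis using 3 by simp
  qed
qed

lemma tree_leaf_path_covers:
  assumes t: "is_tree V E" and p: "is_path V E ps" "inner_deg2 E ps"
    and ends: "deg E (hd ps) = 1" "deg E (last ps) = 1"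
  shows "set ps = V"
proof (rule tree_closed_subset_eq[OF t])
  have "ps \<noteq> []" using p(1) by (auto simp: is_path_def)
  then show "hd ps \<in> set ps" by simp
  show "set ps \<subseteq> V" using p(1) by (simp add: is_path_def)
  fix y z assume "y \<in> set ps" "{y, z} \<in> E"
  then obtain i where "i < length ps" "y = ps ! i" by (auto simp: in_set_conv_nth)
  moreover have "z \<in> nbrs E y" using \<open>{y, z} \<in> E\<close> by (simp add: mem_nbrs_iff)
  ultimately show "z \<in> set ps" using nbrs_on_leaf_path[OF tree_simple_graph[OF t] p ends] by blast
qed

lemma obtain_longest_deg2_path:
  assumes t: "is_tree V E" and uv: "{u, v} \<in> E" "deg E u = 2" "deg E v = 2"
  obtains ps where "is_path V E ps" "inner_deg2 E ps" "length ps \<ge> 4"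
    "\<forall>qs. is_path V E qs \<and> inner_deg2 E qs \<and> length qs \<ge> 4 \<longrightarrow> length qs \<le> length ps"
proof -
  define Q where "Q = {qs. is_path V E qs \<and> inner_deg2 E qs \<and> length qs \<ge> 4}"
  obtain x y where "is_path V E [x, u, v, y]" "inner_deg2 E [x, u, v, y]"
    by (rule deg2_edge_path4[OF t uv])
  then have "[x, u, v, y] \<in> Q" by (simp add: Q_def)
  have "finite Q"
    by (rule finite_subset[OF _ finite_subset_distinct[OF simple_graph_finite[OF tree_simple_graph[OF t]]]])
      (auto simp: Q_def is_path_def)
  define m where "m = Max (length ` Q)"
  have "m \<in> length ` Q" unfolding m_def using \<open>finite Q\<close> \<open>[x, u, v, y] \<in> Q\<close> by (intro Max_in) auto
  then obtain ps where "ps \<in> Q" "length ps = m" by blast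
  moreover have "length qs \<le> m" if "qs \<in> Q" for qs
    using Max_ge[of "length ` Q" "length qs"] \<open>finite Q\<close> that by (simp add: m_def)
  ultimately have "is_path V E ps" "inner_deg2 E ps" "length ps \<ge> 4"
    "\<forall>qs. is_path V E qs \<and> inner_deg2 E qs \<and> length qs \<ge> 4 \<longrightarrow> length qs \<le> length ps"
    by (auto simp: Q_def)
  then show thesis by (rule that)
qed

text \<open>A longest path through \<open>u\<close> and \<open>v\<close> with inner vertices of degree 2 has no end of
  degree 2, and its ends are not both leaves because the tree branches.\<close>

lemma tree_long_deg2_path:
  assumes t: "is_tree V E" and w: "w \<in> V" "deg E w > 2"
    and uv: "{u, v} \<in> E" "deg E u = 2" "deg E v = 2"
  obtains ps where "internal_path V E ps \<or> pendent_path V E ps" "path_len ps \<ge> 3"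
proof -
  obtain ps where p: "is_path V E ps" "inner_deg2 E ps" "length ps \<ge> 4"
    and max: "\<forall>qs. is_path V E qs \<and> inner_deg2 E qs \<and> length qs \<ge> 4 \<longrightarrow> length qs \<le> length ps"
    by (rule obtain_longest_deg2_path[OF t uv])
  have "ps \<noteq> []" using p(3) by auto
  then have ends_V: "hd ps \<in> V" "last ps \<in> V" using p(1) by (auto simp: is_path_def)
  have pos: "deg E y \<ge> 1" if "y \<in> V" for y
    using tree_deg_pos[OF t that w(1)] w(2) by (cases "y = w") auto
  have "deg E (hd ps) \<noteq> 2" by (rule maximal_deg2_path_end[OF t p max])
  then have hd_cases: "deg E (hd ps) = 1 \<or> deg E (hd ps) > 2"
    using pos[OF ends_V(1)] by linarith
  have "deg E (hd (rev ps)) \<noteq> 2"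
    by (rule maximal_deg2_path_end[OF t is_path_rev[OF p(1)] inner_deg2_rev[OF p(2)]]) (use p(3) max in auto)
  then have "deg E (last ps) \<noteq> 2" by (simp add: hd_rev)
  then have last_cases: "deg E (last ps) = 1 \<or> deg E (last ps) > 2"
    using pos[OF ends_V(2)] by linarith
  consider (leaves) "deg E (hd ps) = 1" "deg E (last ps) = 1"
    | (internal) "deg E (hd ps) > 2" "deg E (last ps) > 2"
    | (pendent) "deg E (hd ps) = 1" "deg E (last ps) > 2"
    | (pendent_rev) "deg E (hd ps) > 2" "deg E (last ps) = 1"
    using hd_cases last_cases by blast
  then show thesis
  proof cases
    case leaves
    then have "w \<in> set ps" using tree_leaf_path_covers[OF t p(1,2)] w(1) by blast
    then obtain i where "i < length ps" "w = ps ! i" by (auto simp: in_set_conv_nth)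
    moreover have "deg E (ps ! i) \<le> 2" if i: "i < length ps" for i
    proof -
      consider "i = 0" | "i = length ps - 1" | "0 < i" "i + 1 < length ps" using i by linarith
      then show ?thesis
        using leaves p(2) \<open>ps \<noteq> []\<close> by cases (auto simp: inner_deg2_def hd_conv_nth last_conv_nth)
    qed
    ultimately show thesis using w(2) by fastforce
  next
    case internal
    then show thesis using that[of ps] p by (simp add: internal_path_def path_len_def)
  next
    case pendent
    then show thesis using that[of ps] p by (simp add: pendent_path_def path_len_def)
  next
    case pendent_rev
    then show thesis using that[of "rev ps"] is_path_rev[OF p(1)] inner_deg2_rev[OF p(2)] p(3)
      by (simp add: pendent_path_def path_len_def hd_rev last_rev)
  qed
qed

section \<open>Degree classes of chemical trees\<close>

definition deg_class :: "'a set \<Rightarrow> 'a set set \<Rightarrow> nat \<Rightarrow> 'a set" where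
  "deg_class V E k = {v\<in>V. deg E v = k}"

text \<open>\<open>adj_count V E i j\<close> counts the ordered pairs \<open>(v, u)\<close> of adjacent vertices with degrees
  \<open>i\<close> and \<open>j\<close>: the number of edges between the two degree classes if \<open>i \<noteq> j\<close>, and twice the
  number of edges inside the class if \<open>i = j\<close>.\<close>

definition adj_count :: "'a set \<Rightarrow> 'a set set \<Rightarrow> nat \<Rightarrow> nat \<Rightarrow> nat" where
  "adj_count V E i j = (\<Sum>v\<in>deg_class V E i. card {u\<in>nbrs E v. deg E u = j})"

lemma sum_deg_deg_class: "(\<Sum>v\<in>deg_class V E k. deg E v) = k * card (deg_class V E k)"
  by (simp add: deg_class_def)

lemma adj_count_le_card_deg_class:
  assumes "\<And>v. v \<in> deg_class V E i \<Longrightarrow> card {u\<in>nbrs E v. deg E u = j} \<le> 1"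
  shows "adj_count V E i j \<le> card (deg_class V E i)"
proof -
  have "adj_count V E i j \<le> (\<Sum>v\<in>deg_class V E i. 1)"
    unfolding adj_count_def by (rule sum_mono) (rule assms)
  then show ?thesis by simp
qed

lemma card_le_1_if_unique:
  assumes "finite A" and "\<And>a b. a \<in> A \<Longrightarrow> b \<in> A \<Longrightarrow> a = b"
  shows "card A \<le> 1"
  using assms(2) by (auto simp: card_le_Suc0_iff_eq[OF assms(1)])

lemma deg_class_subset: "deg_class V E k \<subseteq> V"
  by (auto simp: deg_class_def)

lemma nbrs_with_deg:
  "simple_graph V E \<Longrightarrow> {u\<in>V. {u, v} \<in> E \<and> deg E u = k} = {u\<in>nbrs E v. deg E u = k}"
  using nbrs_subset[of V E v] by (auto simp: nbrs_def)

lemma twice_M2_eq_sum_nbrs: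
  assumes sg: "simple_graph V E"
  shows "2 * M2 E = (\<Sum>v\<in>V. \<Sum>u\<in>nbrs E v. deg E v * deg E u)"
proof -
  have "2 * (\<Prod>w\<in>e. deg E w) = (\<Sum>v\<in>e. \<Prod>w\<in>e. deg E w)" if e: "e \<in> E" for e
  proof -
    obtain a b where "e = {a, b}" "a \<noteq> b" "a \<in> V" "b \<in> V" by (rule simple_graph_edgeE[OF sg e])
    then show ?thesis by simp
  qed
  then have "2 * M2 E = (\<Sum>e\<in>E. \<Sum>v\<in>e. \<Prod>w\<in>e. deg E w)"
    unfolding M2_def sum_distrib_left by (rule sum.cong[OF refl])
  also have "\<dots> = (\<Sum>v\<in>V. \<Sum>u\<in>nbrs E v. \<Prod>w\<in>{u, v}. deg E w)"
    by (rule sum_edges_eq_sum_nbrs[OF sg])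
  also have "\<dots> = (\<Sum>v\<in>V. \<Sum>u\<in>nbrs E v. deg E v * deg E u)"
  proof (rule sum.cong[OF refl], rule sum.cong[OF refl])
    fix v u assume "u \<in> nbrs E v"
    then have "u \<noteq> v" using not_mem_nbrs_self[OF sg] by auto
    then show "(\<Prod>w\<in>{u, v}. deg E w) = deg E v * deg E u" by simp
  qed
  finally show ?thesis .
qed

locale branched_chemical_tree =
  fixes V :: "'a set" and E :: "'a set set"
  assumes tree: "is_tree V E"
    and deg_le_4: "v \<in> V \<Longrightarrow> deg E v \<le> 4"
    and branching: "\<exists>w\<in>V. deg E w > 2"
begin

lemma simple: "simple_graph V E"
  using tree by (rule tree_simple_graph)

lemma finite_deg_class: "finite (deg_class V E k)"
  using simple_graph_finite[OF simple] by (simp add: deg_class_def)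

lemma deg_range:
  assumes "v \<in> V"
  shows "deg E v \<in> {1, 2, 3, 4}"
proof -
  obtain w where "w \<in> V" "deg E w > 2" using branching by blast
  then have "deg E v \<ge> 1" using tree_deg_pos[OF tree assms] by (cases "v = w") auto
  with deg_le_4[OF assms] show ?thesis by auto
qed

lemma sum_by_deg_class:
  fixes f :: "'a \<Rightarrow> 'b::comm_monoid_add"
  assumes "finite A" "A \<subseteq> V"
  shows "(\<Sum>x\<in>A. f x) = (\<Sum>k\<in>{1,2,3,4::nat}. \<Sum>x\<in>{x\<in>A. deg E x = k}. f x)"
proof -
  have "deg E ` A \<subseteq> {1, 2, 3, 4}" using assms(2) deg_range by blast
  then show ?thesis by (intro sum.group[symmetric] assms(1)) simp_all
qed

lemma sum_V_by_deg_class: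
  fixes f :: "'a \<Rightarrow> 'b::comm_monoid_add"
  shows "(\<Sum>x\<in>V. f x) = (\<Sum>k\<in>{1,2,3,4::nat}. \<Sum>x\<in>deg_class V E k. f x)"
  using sum_by_deg_class[OF simple_graph_finite[OF simple] subset_refl, of f] by (simp add: deg_class_def)

lemma deg_eq_sum_nbrs_by_deg: "deg E v = (\<Sum>j\<in>{1,2,3,4::nat}. card {u\<in>nbrs E v. deg E u = j})"
proof -
  have "deg E v = (\<Sum>u\<in>nbrs E v. 1)" by (simp add: deg_eq_card_nbrs)
  also have "\<dots> = (\<Sum>j\<in>{1,2,3,4::nat}. \<Sum>u\<in>{u\<in>nbrs E v. deg E u = j}. 1)"
    by (rule sum_by_deg_class[OF finite_nbrs[OF simple] nbrs_subset[OF simple]])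
  finally show ?thesis by simp
qed

lemma adj_count_row: "k * card (deg_class V E k) = (\<Sum>j\<in>{1,2,3,4::nat}. adj_count V E k j)"
proof -
  have "k * card (deg_class V E k) = (\<Sum>v\<in>deg_class V E k. \<Sum>j\<in>{1,2,3,4::nat}. card {u\<in>nbrs E v. deg E u = j})"
    unfolding sum_deg_deg_class[symmetric] by (intro sum.cong refl deg_eq_sum_nbrs_by_deg)
  also have "\<dots> = (\<Sum>j\<in>{1,2,3,4::nat}. adj_count V E k j)"
    unfolding adj_count_def by (rule sum.swap)
  finally show ?thesis .
qed

lemma adj_count_sym: "adj_count V E i j = adj_count V E j i"
proof -
  have eq: "{u\<in>nbrs E v. deg E u = k} = {u\<in>deg_class V E k. v \<in> nbrs E u}" for v k
    using nbrs_subset[OF simple] by (auto simp: deg_class_def mem_nbrs_commute)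
  have "adj_count V E i j = (\<Sum>v\<in>deg_class V E i. \<Sum>u\<in>deg_class V E j. if v \<in> nbrs E u then 1 else 0)"
    unfolding adj_count_def eq by (simp add: sum.inter_filter[symmetric] finite_deg_class)
  also have "\<dots> = (\<Sum>u\<in>deg_class V E j. \<Sum>v\<in>deg_class V E i. if v \<in> nbrs E u then 1 else 0)"
    by (rule sum.swap)
  also have "\<dots> = (\<Sum>u\<in>deg_class V E j. \<Sum>v\<in>deg_class V E i. if u \<in> nbrs E v then 1 else 0)"
    by (simp add: mem_nbrs_commute)
  also have "\<dots> = adj_count V E j i"
    unfolding adj_count_def eq by (simp add: sum.inter_filter[symmetric] finite_deg_class)
  finally show ?thesis .
qed

lemma twice_M2: "2 * M2 E = (\<Sum>i\<in>{1,2,3,4::nat}. \<Sum>j\<in>{1,2,3,4::nat}. i * j * adj_count V E i j)"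
proof -
  have row: "(\<Sum>u\<in>nbrs E v. deg E v * deg E u) = (\<Sum>j\<in>{1,2,3,4::nat}. i * j * card {u\<in>nbrs E v. deg E u = j})"
    if "v \<in> deg_class V E i" for i v
  proof -
    have "(\<Sum>u\<in>nbrs E v. deg E v * deg E u)
        = (\<Sum>j\<in>{1,2,3,4::nat}. \<Sum>u\<in>{u\<in>nbrs E v. deg E u = j}. deg E v * deg E u)"
      by (rule sum_by_deg_class[OF finite_nbrs[OF simple] nbrs_subset[OF simple]])
    also have "\<dots> = (\<Sum>j\<in>{1,2,3,4::nat}. \<Sum>u\<in>{u\<in>nbrs E v. deg E u = j}. i * j)"
      using that by (auto simp: deg_class_def intro!: sum.cong)
    finally show ?thesis by (simp add: mult_ac)
  qed
  have "2 * M2 E = (\<Sum>i\<in>{1,2,3,4::nat}. \<Sum>v\<in>deg_class V E i. \<Sum>u\<in>nbrs E v. deg E v * deg E u)"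
    unfolding twice_M2_eq_sum_nbrs[OF simple] by (rule sum_V_by_deg_class)
  also have "\<dots> = (\<Sum>i\<in>{1,2,3,4::nat}. \<Sum>v\<in>deg_class V E i. \<Sum>j\<in>{1,2,3,4::nat}. i * j * card {u\<in>nbrs E v. deg E u = j})"
    using row by (intro sum.cong refl) simp
  also have "\<dots> = (\<Sum>i\<in>{1,2,3,4::nat}. \<Sum>j\<in>{1,2,3,4::nat}. i * j * adj_count V E i j)"
    unfolding adj_count_def sum_distrib_left by (intro sum.cong refl sum.swap)
  finally show ?thesis .
qed

lemma adj_count_neq_0_iff:
  "adj_count V E i j \<noteq> 0 \<longleftrightarrow> (\<exists>u\<in>V. \<exists>v\<in>V. {u, v} \<in> E \<and> deg E u = i \<and> deg E v = j)"
proof -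
  have "adj_count V E i j \<noteq> 0 \<longleftrightarrow> (\<exists>v\<in>deg_class V E i. \<exists>u\<in>nbrs E v. deg E u = j)"
    unfolding adj_count_def using finite_nbrs[OF simple] by (auto simp: finite_deg_class)
  also have "\<dots> \<longleftrightarrow> (\<exists>u\<in>V. \<exists>v\<in>V. {u, v} \<in> E \<and> deg E u = i \<and> deg E v = j)"
  proof
    assume "\<exists>v\<in>deg_class V E i. \<exists>u\<in>nbrs E v. deg E u = j"
    then obtain v u where "v \<in> V" "deg E v = i" and u: "u \<in> nbrs E v" "deg E u = j"
      by (auto simp: deg_class_def)
    moreover have "u \<in> V" using u(1) nbrs_subset[OF simple] by blast
    moreover have "{v, u} \<in> E" using u(1) by (simp add: mem_nbrs_iff)
    ultimately show "\<exists>u\<in>V. \<exists>v\<in>V. {u, v} \<in> E \<and> deg E u = i \<and> deg E v = j" by blast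
  next
    assume "\<exists>u\<in>V. \<exists>v\<in>V. {u, v} \<in> E \<and> deg E u = i \<and> deg E v = j"
    then obtain u v where "u \<in> V" "{u, v} \<in> E" "deg E u = i" "deg E v = j" by blast
    then have "u \<in> deg_class V E i" "v \<in> nbrs E u" "deg E v = j"
      by (auto simp: deg_class_def mem_nbrs_iff)
    then show "\<exists>v\<in>deg_class V E i. \<exists>u\<in>nbrs E v. deg E u = j" by blast
  qed
  finally show ?thesis .
qed

lemma adj_count_1_1: "adj_count V E 1 1 = 0"
proof (rule ccontr)
  assume "adj_count V E 1 1 \<noteq> 0"
  then obtain u v where uv: "u \<in> V" "v \<in> V" "{u, v} \<in> E" "deg E u = 1" "deg E v = 1"
    unfolding adj_count_neq_0_iff by blast
  have "{v, u} \<in> E" using uv(3) by (simp add: insert_commute)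
  have nbrs: "nbrs E u = {v}" "nbrs E v = {u}"
    using nbrs_leaf[OF simple uv(4,3)] nbrs_leaf[OF simple uv(5) \<open>{v, u} \<in> E\<close>] by simp_all
  have "{u, v} = V"
  proof (rule tree_closed_subset_eq[OF tree])
    show "{u, v} \<subseteq> V" "u \<in> {u, v}" using uv by auto
    fix y z assume "y \<in> {u, v}" "{y, z} \<in> E"
    then have "z \<in> nbrs E y" by (simp add: mem_nbrs_iff)
    with \<open>y \<in> {u, v}\<close> nbrs show "z \<in> {u, v}" by auto
  qed
  then show False using branching uv(4,5) by auto
qed

lemma card_V_by_deg_class:
  "card V = card (deg_class V E 1) + card (deg_class V E 2) + card (deg_class V E 3) + card (deg_class V E 4)"
  using sum_V_by_deg_class[of "\<lambda>_. 1 :: nat"] by simp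

lemma handshake_by_deg_class:
  "card (deg_class V E 1) + 2 * card (deg_class V E 2) + 3 * card (deg_class V E 3)
    + 4 * card (deg_class V E 4) = 2 * card E"
  using sum_V_by_deg_class[of "deg E"] sum_deg_eq_twice_card_edges[OF simple]
  by (simp add: sum_deg_deg_class)

lemma branching_vertices_eq: "branching_vertices V E = deg_class V E 3 \<union> deg_class V E 4"
  using deg_range by (fastforce simp: branching_vertices_def deg_class_def)

lemma deg_class_3_4_disjoint: "deg_class V E 3 \<inter> deg_class V E 4 = {}"
  by (auto simp: deg_class_def)

lemma card_branching_vertices:
  "card (branching_vertices V E) = card (deg_class V E 3) + card (deg_class V E 4)"
  unfolding branching_vertices_eq
  by (rule card_Un_disjoint[OF finite_deg_class finite_deg_class deg_class_3_4_disjoint])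

lemma nbrs_inter_deg_class: "nbrs E v \<inter> deg_class V E k = {u\<in>nbrs E v. deg E u = k}"
  using nbrs_subset[OF simple] by (auto simp: deg_class_def)

lemma twice_card_induced_deg4: "2 * card (induced_edges E (deg_class V E 4)) = adj_count V E 4 4"
  using card_induced_edges[OF simple deg_class_subset] by (simp add: adj_count_def nbrs_inter_deg_class)

lemma twice_card_induced_branching:
  "2 * card (induced_edges E (branching_vertices V E)) = adj_count V E 3 3 + 2 * adj_count V E 3 4 + adj_count V E 4 4"
proof -
  let ?B = "branching_vertices V E"
  have "nbrs E v \<inter> ?B = {u\<in>nbrs E v. deg E u = 3} \<union> {u\<in>nbrs E v. deg E u = 4}" for v
    unfolding branching_vertices_eq Int_Un_distrib nbrs_inter_deg_class ..
  then have card_nbrs: "card (nbrs E v \<inter> ?B) = card {u\<in>nbrs E v. deg E u = 3} + card {u\<in>nbrs E v. deg E u = 4}" for v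
    using finite_nbrs[OF simple] by (simp add: card_Un_disjoint disjoint_iff)
  have "2 * card (induced_edges E ?B) = (\<Sum>v\<in>?B. card (nbrs E v \<inter> ?B))"
    by (rule card_induced_edges[OF simple]) (auto simp: branching_vertices_def)
  also have "\<dots> = (\<Sum>v\<in>deg_class V E 3. card (nbrs E v \<inter> ?B)) + (\<Sum>v\<in>deg_class V E 4. card (nbrs E v \<inter> ?B))"
    unfolding branching_vertices_eq
    by (rule sum.union_disjoint[OF finite_deg_class finite_deg_class deg_class_3_4_disjoint])
  also have "\<dots> = adj_count V E 3 3 + adj_count V E 3 4 + adj_count V E 4 3 + adj_count V E 4 4"
    unfolding card_nbrs adj_count_def by (simp add: sum.distrib)
  finally show ?thesis using adj_count_sym[of 4 3] by simp
qed

lemma adj_count_2_1_le: "adj_count V E 2 1 \<le> card (deg_class V E 2)"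
proof (rule adj_count_le_card_deg_class, rule card_le_1_if_unique)
  fix x a c assume "x \<in> deg_class V E 2"
    and "a \<in> {u\<in>nbrs E x. deg E u = 1}" "c \<in> {u\<in>nbrs E x. deg E u = 1}"
  moreover obtain w where "w \<in> V" "deg E w > 2" using branching by blast
  ultimately show "a = c" using deg2_not_between_leaves[OF tree] by (auto simp: deg_class_def)
qed (use finite_nbrs[OF simple] in simp)

lemma adj_count_2_4_le:
  assumes short: "\<forall>ps. internal_path V E ps \<longrightarrow> path_len ps = 1"
  shows "adj_count V E 2 4 \<le> card (deg_class V E 2)"
proof (rule adj_count_le_card_deg_class, rule card_le_1_if_unique)
  fix x a c assume x: "x \<in> deg_class V E 2"
    and a: "a \<in> {u\<in>nbrs E x. deg E u = 4}" and c: "c \<in> {u\<in>nbrs E x. deg E u = 4}"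
  show "a = c"
  proof (rule ccontr)
    assume "a \<noteq> c"
    then have "is_path V E [a, x, c]" using is_path_3[OF simple] a c by blast
    moreover have "inner_deg2 E [a, x, c]" using x by (intro inner_deg2_3) (simp add: deg_class_def)
    ultimately have "internal_path V E [a, x, c]" using a c by (simp add: internal_path_def)
    then show False using short by (auto simp: path_len_def)
  qed
qed (use finite_nbrs[OF simple] in simp)

lemma internal_path_length_1:
  assumes subtree: "card (induced_edges E (branching_vertices V E)) + 1 = card (branching_vertices V E)"
    and ip: "internal_path V E ps"
  shows "path_len ps = 1"
proof (rule ccontr)
  assume "path_len ps \<noteq> 1"
  have p: "is_path V E ps" using ip by (simp add: internal_path_def)
  then have "length ps \<ge> 3" "ps \<noteq> []" using \<open>path_len ps \<noteq> 1\<close> by (auto simp: path_len_def is_path_def)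
  show False
  proof (rule subtree_no_detour[OF tree _ subtree p \<open>length ps \<ge> 3\<close>])
    show "branching_vertices V E \<subseteq> V" by (auto simp: branching_vertices_def)
    show "hd ps \<in> branching_vertices V E" "last ps \<in> branching_vertices V E"
      using ip p \<open>ps \<noteq> []\<close> by (auto simp: internal_path_def branching_vertices_def is_path_def)
    show "ps ! i \<notin> branching_vertices V E" if "0 < i" "i + 1 < length ps" for i
      using ip that by (auto simp: internal_path_def inner_deg2_def branching_vertices_def)
  qed
qed

lemma deg4_subtree_one_deg4_nbr:
  assumes subtree: "card (induced_edges E (deg_class V E 4)) + 1 = card (deg_class V E 4)"
    and "deg E v \<noteq> 4"
  shows "card {u\<in>nbrs E v. deg E u = 4} \<le> 1"
proof (rule card_le_1_if_unique)
  fix a c assume a: "a \<in> {u\<in>nbrs E v. deg E u = 4}" and c: "c \<in> {u\<in>nbrs E v. deg E u = 4}"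
  show "a = c"
  proof (rule ccontr)
    assume "a \<noteq> c"
    moreover have "a \<in> V" "c \<in> V" using a c nbrs_subset[OF simple] by auto
    ultimately show False
      using subtree_no_common_outside_nbr[OF tree _ subtree] a c \<open>deg E v \<noteq> 4\<close>
      by (auto simp: deg_class_def)
  qed
qed (use finite_nbrs[OF simple] in simp)

lemma long_pendent_path_adj_count_2_2:
  assumes "pendent_path V E ps" and "path_len ps > 2"
  shows "adj_count V E 2 2 \<noteq> 0"
proof -
  have p: "is_path V E ps" "inner_deg2 E ps" and "length ps \<ge> 4"
    using assms by (auto simp: pendent_path_def path_len_def)
  then have "{ps ! 1, ps ! 2} \<in> E" "deg E (ps ! 1) = 2" "deg E (ps ! 2) = 2" "ps ! 1 \<in> V" "ps ! 2 \<in> V"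
    using is_path_edge[OF p(1), of 1] by (auto simp: inner_deg2_def is_path_def numeral_2_eq_2)
  then show ?thesis unfolding adj_count_neq_0_iff by blast
qed

lemma adj_count_2_2_long_path:
  assumes "adj_count V E 2 2 \<noteq> 0"
  obtains ps where "internal_path V E ps \<or> pendent_path V E ps" "path_len ps \<ge> 3"
proof -
  obtain u v where uv: "{u, v} \<in> E" "deg E u = 2" "deg E v = 2"
    using assms unfolding adj_count_neq_0_iff by blast
  obtain w where w: "w \<in> V" "deg E w > 2" using branching by blast
  show thesis by (rule tree_long_deg2_path[OF tree w uv]) (rule that)
qed

end

section \<open>Linear relations between the counts\<close>

text \<open>Here \<open>n1\<close>, ..., \<open>n4\<close> count the vertices of degree 1 to 4, \<open>pij\<close> stands for
  \<open>adj_count V E i j\<close> (so \<open>p22\<close>, \<open>p33\<close>, \<open>p44\<close> are twice edge counts), \<open>M\<close> is the Zagreb index,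
  and \<open>eB\<close> and \<open>eF\<close> count the edges induced by the branching vertices and by the vertices of
  degree 4.\<close>

locale zagreb_counts =
  fixes n b n1 n2 n3 n4 p12 p13 p14 p22 p23 p24 p33 p34 p44 M eB eF :: int
  assumes vertices: "n = n1 + n2 + n3 + n4" and branching: "b = n3 + n4"
    and row1: "n1 = p12 + p13 + p14"
    and row2: "2 * n2 = p12 + p22 + p23 + p24"
    and row3: "3 * n3 = p13 + p23 + p33 + p34"
    and row4: "4 * n4 = p14 + p24 + p34 + p44"
    and handshake: "n1 + 2 * n2 + 3 * n3 + 4 * n4 = 2 * n - 2"
    and zagreb: "2 * M = 4 * p12 + 6 * p13 + 8 * p14 + 4 * p22 + 12 * p23 + 16 * p24
      + 9 * p33 + 24 * p34 + 16 * p44"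
    and deg4_edges: "2 * eF = p44" and branching_edges: "2 * eB = p33 + 2 * p34 + p44"
    and branching_forest: "eB + 1 \<le> b" and deg4_forest: "n4 \<ge> 1 \<Longrightarrow> eF + 1 \<le> n4"
    and nonneg: "n1 \<ge> 0" "n2 \<ge> 0" "n3 \<ge> 0" "n4 \<ge> 0" "p12 \<ge> 0" "p13 \<ge> 0" "p14 \<ge> 0"
      "p22 \<ge> 0" "p23 \<ge> 0" "p24 \<ge> 0" "p33 \<ge> 0" "p34 \<ge> 0" "p44 \<ge> 0" "eF \<ge> 0" "eB \<ge> 0"
    and b_less: "2 * b < n - 2"
begin

lemma leaves: "n1 = n3 + 2 * n4 + 2"
  using vertices handshake by linarith

text \<open>Each bound minus \<open>M\<close> as a combination of nonnegative quantities (the terms with \<open>eB\<close> and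
  \<open>eF\<close> by the forest inequalities).\<close>

lemma slack_1:
  "8 * n + 32 * b - 24 - 2 * M = 6 * p13 + 4 * p14 + 4 * p23 + 8 * p34 + 7 * p33 + 8 * b - 8 - 8 * eB + 4 * n3"
proof -
  have "2 * M + 6 * p13 + 4 * p14 + 4 * p23 + 8 * p34 + 7 * p33 = 8 * n2 + 36 * n3 + 48 * n4 + 8 * eB"
    using row2 row3 row4 zagreb branching_edges by linarith
  then show ?thesis using leaves vertices branching by linarith
qed

lemma slack_2:
  "12 * n + 12 * b - 40 - 2 * M = 2 * p23 + 6 * p34 + 2 * p22 + 5 * p33 + 12 * b - 12 - 12 * eB + 2 * n3"
proof -
  have "2 * M + 2 * p23 + 6 * p34 + 2 * p22 + 5 * p33 = -2 * n1 + 12 * n2 + 24 * n3 + 40 * n4 + 12 * eB"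
    using row1 row2 row3 row4 zagreb branching_edges by linarith
  then show ?thesis using leaves vertices branching by linarith
qed

lemma slack_3:
  "20 * n - 12 * b - 56 - 2 * M
    = 2 * p23 + 2 * p22 + 2 * p33 + 6 * b - 6 - 6 * eB + 6 * n4 - 6 - 6 * eF + 8 * n2"
proof -
  have "2 * M + 2 * p23 + 2 * p22 + 2 * p33 = -2 * n1 + 12 * n2 + 24 * n3 + 40 * n4 + 6 * eB + 6 * eF"
    using row1 row2 row3 row4 zagreb branching_edges deg4_edges by linarith
  then show ?thesis using leaves vertices branching by linarith
qed

lemma slack_4:
  "32 * n - 40 * b - 72 - 2 * M
    = 4 * p14 + 2 * p23 + 4 * p24 + 2 * p22 + 2 * b - 2 - 2 * eB + 2 * n4 - 2 - 2 * eF + 20 * n2"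
proof -
  have "2 * M + 4 * p14 + 2 * p23 + 4 * p24 + 2 * p22 = -2 * n1 + 12 * n2 + 24 * n3 + 56 * n4 + 2 * eB + 2 * eF"
    using row1 row2 row3 row4 zagreb branching_edges deg4_edges by linarith
  then show ?thesis using leaves vertices branching by linarith
qed

text \<open>Without vertices of degree 4 the term \<open>n4 - 1 - eF\<close> of \<open>slack_3\<close> and \<open>slack_4\<close> is
  negative; then \<open>2 b < n - 2\<close> provides a vertex of degree 2 to compensate.\<close>

lemma no_deg4: "n4 = 0 \<Longrightarrow> eF = 0 \<and> n2 \<ge> 1"
  using row4 nonneg deg4_edges leaves vertices branching b_less by linarith

lemma bound_1: "M \<le> 4 * n + 16 * b - 12"
  using slack_1 nonneg branching_forest by linarith

lemma bound_2: "M \<le> 6 * n + 6 * b - 20"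
  using slack_2 nonneg branching_forest by linarith

lemma bound_3: "M \<le> 10 * n - 6 * b - 28"
  using slack_3 nonneg branching_forest deg4_forest no_deg4 by (cases "n4 \<ge> 1") linarith+

lemma bound_4: "M \<le> 16 * n - 20 * b - 36"
  using slack_4 nonneg branching_forest deg4_forest no_deg4 by (cases "n4 \<ge> 1") linarith+

lemma M_eq_bound_1_iff: "M = 4 * n + 16 * b - 12 \<longleftrightarrow> n3 = 0 \<and> p14 = 0 \<and> eB + 1 = b"
proof
  assume "n3 = 0 \<and> p14 = 0 \<and> eB + 1 = b"
  moreover from this have "p13 = 0" "p23 = 0" "p33 = 0" "p34 = 0" using row3 nonneg by linarith+
  ultimately show "M = 4 * n + 16 * b - 12" using slack_1 by linarith
qed (use slack_1 nonneg branching_forest in linarith)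

lemma M_eq_bound_2_iff: "M = 6 * n + 6 * b - 20 \<longleftrightarrow> n3 = 0 \<and> p22 = 0 \<and> eB + 1 = b"
proof
  assume "n3 = 0 \<and> p22 = 0 \<and> eB + 1 = b"
  moreover from this have "p13 = 0" "p23 = 0" "p33 = 0" "p34 = 0" using row3 nonneg by linarith+
  ultimately show "M = 6 * n + 6 * b - 20" using slack_2 by linarith
qed (use slack_2 nonneg branching_forest in linarith)

lemma M_eq_bound_3_iff:
  "M = 10 * n - 6 * b - 28 \<longleftrightarrow> n2 = 0 \<and> p33 = 0 \<and> eB + 1 = b \<and> eF + 1 = n4"
proof
  assume "n2 = 0 \<and> p33 = 0 \<and> eB + 1 = b \<and> eF + 1 = n4"
  moreover from this have "p22 = 0" "p23 = 0" using row2 nonneg by linarith+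
  ultimately show "M = 10 * n - 6 * b - 28" using slack_3 by linarith
next
  assume "M = 10 * n - 6 * b - 28"
  then show "n2 = 0 \<and> p33 = 0 \<and> eB + 1 = b \<and> eF + 1 = n4"
    using slack_3 nonneg branching_forest deg4_forest no_deg4 by (cases "n4 \<ge> 1") linarith+
qed

lemma M_eq_bound_4_iff:
  "M = 16 * n - 20 * b - 36 \<longleftrightarrow> n2 = 0 \<and> p14 = 0 \<and> eB + 1 = b \<and> eF + 1 = n4"
proof
  assume "n2 = 0 \<and> p14 = 0 \<and> eB + 1 = b \<and> eF + 1 = n4"
  moreover from this have "p22 = 0" "p23 = 0" "p24 = 0" using row2 nonneg by linarith+
  ultimately show "M = 16 * n - 20 * b - 36" using slack_4 by linarith
next
  assume "M = 16 * n - 20 * b - 36"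
  then show "n2 = 0 \<and> p14 = 0 \<and> eB + 1 = b \<and> eF + 1 = n4"
    using slack_4 nonneg branching_forest deg4_forest no_deg4 by (cases "n4 \<ge> 1") linarith+
qed

lemma branching_tree_if_no_deg2: "n2 = 0 \<Longrightarrow> eB + 1 = b"
  using row1 row2 row3 row4 branching_edges leaves branching nonneg by linarith

lemma degree_counts_1_iff: "n4 = b \<and> n2 = n - 3 * b - 2 \<and> n1 = 2 * b + 2 \<longleftrightarrow> n3 = 0"
  using leaves vertices branching by linarith

lemma degree_counts_2_iff: "n4 = n - 2 * b - 2 \<and> n3 = 3 * b - n + 2 \<and> n1 = n - b \<longleftrightarrow> n2 = 0"
  using leaves vertices branching by linarith

lemma small_b_no_leaf_at_deg4:
  "5 * b \<le> n - 4 \<Longrightarrow> n3 = 0 \<Longrightarrow> p22 = 0 \<Longrightarrow> p12 \<le> n2 \<Longrightarrow> p24 \<le> n2 \<Longrightarrow> p14 = 0"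
  using row1 row2 row3 leaves vertices branching nonneg by linarith

lemma medium_b_leaf_at_deg4:
  "5 * b > n - 4 \<Longrightarrow> n3 = 0 \<Longrightarrow> p12 \<le> n2 \<Longrightarrow> p14 \<noteq> 0"
  using row1 row3 leaves vertices branching nonneg by linarith

lemma large_b_leaf_at_deg4:
  "7 * b < 3 * n - 4 \<Longrightarrow> n2 = 0 \<Longrightarrow> eF + 1 = n4 \<Longrightarrow> p34 \<le> n3 \<Longrightarrow> p14 \<noteq> 0"
  using row2 row4 deg4_edges leaves vertices branching nonneg by linarith

lemma largest_b_no_leaf_at_deg4:
  "7 * b \<ge> 3 * n - 4 \<Longrightarrow> n2 = 0 \<Longrightarrow> eF + 1 = n4 \<Longrightarrow> p33 = 0 \<Longrightarrow> p14 = 0"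
  using row1 row2 row3 row4 deg4_edges leaves vertices branching nonneg by linarith

end

section \<open>The extremal trees\<close>

lemma b_le_n_minus_4_div_5_iff: "real b \<le> (real n - 4) / 5 \<longleftrightarrow> 5 * int b \<le> int n - 4"
proof -
  have "real b \<le> (real n - 4) / 5 \<longleftrightarrow> real_of_int (5 * int b) \<le> real_of_int (int n - 4)"
    by (simp add: field_simps)
  then show ?thesis by (simp only: of_int_le_iff)
qed

lemma b_less_n_minus_2_div_3_iff: "real b < (real n - 2) / 3 \<longleftrightarrow> 3 * int b < int n - 2"
proof -
  have "real b < (real n - 2) / 3 \<longleftrightarrow> real_of_int (3 * int b) < real_of_int (int n - 2)"
    by (simp add: field_simps)
  then show ?thesis by (simp only: of_int_less_iff)
qed

lemma b_less_3n_minus_4_div_7_iff: "real b < (3 * real n - 4) / 7 \<longleftrightarrow> 7 * int b < 3 * int n - 4"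
proof -
  have "real b < (3 * real n - 4) / 7 \<longleftrightarrow> real_of_int (7 * int b) < real_of_int (3 * int n - 4)"
    by (simp add: field_simps)
  then show ?thesis by (simp only: of_int_less_iff)
qed

lemma b_less_half_n_minus_1_iff: "real b < real n / 2 - 1 \<longleftrightarrow> 2 * int b < int n - 2"
proof -
  have "real b < real n / 2 - 1 \<longleftrightarrow> real_of_int (2 * int b) < real_of_int (int n - 2)"
    by (simp add: field_simps)
  then show ?thesis by (simp only: of_int_less_iff)
qed

lemma int_add_1_eq_iff: "int a + 1 = int c \<longleftrightarrow> a + 1 = c"
  by (metis of_nat_1 of_nat_add of_nat_eq_iff)

lemma n_deg_eq_card_deg_class: "n_deg V E k = card (deg_class V E k)"
  by (simp add: n_deg_def deg_class_def)

locale CT_star_tree =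
  fixes V :: "'a set" and E :: "'a set set" and n b :: nat
  assumes b_pos: "1 \<le> b" and b_less: "2 * int b < int n - 2" and CT_star: "CT_star n b V E"
begin

lemma card_V: "card V = n" and card_branching: "card (branching_vertices V E) = b"
  using CT_star by (simp_all add: CT_star_def)

sublocale branched_chemical_tree V E
proof
  show "is_tree V E" using CT_star by (simp add: CT_star_def chemical_tree_def)
  show "deg E v \<le> 4" if "v \<in> V" for v using CT_star that by (simp add: CT_star_def chemical_tree_def)
  have "branching_vertices V E \<noteq> {}" using card_branching b_pos by auto
  then show "\<exists>w\<in>V. deg E w > 2" by (auto simp: branching_vertices_def)
qed

abbreviation N :: "nat \<Rightarrow> int" where "N k \<equiv> int (card (deg_class V E k))"
abbreviation P :: "nat \<Rightarrow> nat \<Rightarrow> int" where "P i j \<equiv> int (adj_count V E i j)"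
abbreviation eB :: int where "eB \<equiv> int (card (induced_edges E (branching_vertices V E)))"
abbreviation eF :: int where "eF \<equiv> int (card (induced_edges E (deg_class V E 4)))"

lemma adj_count_row_expanded:
  "k * card (deg_class V E k) = adj_count V E k 1 + adj_count V E k 2 + adj_count V E k 3 + adj_count V E k 4"
  using adj_count_row[of k] by simp

lemma twice_M2_expanded:
  "2 * int (M2 E) = 4 * P 1 2 + 6 * P 1 3 + 8 * P 1 4 + 4 * P 2 2 + 12 * P 2 3 + 16 * P 2 4
    + 9 * P 3 3 + 24 * P 3 4 + 16 * P 4 4"
proof -
  have "2 * M2 E = 4 * adj_count V E 1 2 + 6 * adj_count V E 1 3 + 8 * adj_count V E 1 4
    + 4 * adj_count V E 2 2 + 12 * adj_count V E 2 3 + 16 * adj_count V E 2 4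
    + 9 * adj_count V E 3 3 + 24 * adj_count V E 3 4 + 16 * adj_count V E 4 4"
    using twice_M2 adj_count_1_1 adj_count_sym[of 2 1] adj_count_sym[of 3 1] adj_count_sym[of 4 1]
      adj_count_sym[of 3 2] adj_count_sym[of 4 2] adj_count_sym[of 4 3] by simp
  then have "int (2 * M2 E) = int (4 * adj_count V E 1 2 + 6 * adj_count V E 1 3 + 8 * adj_count V E 1 4
    + 4 * adj_count V E 2 2 + 12 * adj_count V E 2 3 + 16 * adj_count V E 2 4
    + 9 * adj_count V E 3 3 + 24 * adj_count V E 3 4 + 16 * adj_count V E 4 4)"
    by (rule arg_cong)
  then show ?thesis by simp
qed

sublocale counts: zagreb_counts "int n" "int b" "N 1" "N 2" "N 3" "N 4"
  "P 1 2" "P 1 3" "P 1 4" "P 2 2" "P 2 3" "P 2 4" "P 3 3" "P 3 4" "P 4 4" "int (M2 E)" eB eF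
proof
  show "int n = N 1 + N 2 + N 3 + N 4" using card_V_by_deg_class card_V by simp
  show "int b = N 3 + N 4" using card_branching_vertices card_branching by simp
  show "N 1 = P 1 2 + P 1 3 + P 1 4" using adj_count_row_expanded[of 1] adj_count_1_1 by simp
  show "2 * N 2 = P 1 2 + P 2 2 + P 2 3 + P 2 4"
    using adj_count_row_expanded[of 2] adj_count_sym[of 2 1] by simp
  show "3 * N 3 = P 1 3 + P 2 3 + P 3 3 + P 3 4"
    using adj_count_row_expanded[of 3] adj_count_sym[of 3 1] adj_count_sym[of 3 2] by simp
  show "4 * N 4 = P 1 4 + P 2 4 + P 3 4 + P 4 4"
    using adj_count_row_expanded[of 4] adj_count_sym[of 4 1] adj_count_sym[of 4 2] adj_count_sym[of 4 3]
    by simp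
  have "card V \<ge> 1" using tree simple_graph_finite[OF simple] by (simp add: is_tree_def Suc_le_eq card_gt_0_iff)
  then show "N 1 + 2 * N 2 + 3 * N 3 + 4 * N 4 = 2 * int n - 2"
    using handshake_by_deg_class tree_card_edges[OF tree] card_V by linarith
  show "2 * int (M2 E) = 4 * P 1 2 + 6 * P 1 3 + 8 * P 1 4 + 4 * P 2 2 + 12 * P 2 3 + 16 * P 2 4
    + 9 * P 3 3 + 24 * P 3 4 + 16 * P 4 4" by (rule twice_M2_expanded)
  show "2 * eF = P 4 4" using twice_card_induced_deg4 by simp
  show "2 * eB = P 3 3 + 2 * P 3 4 + P 4 4" using twice_card_induced_branching by simp
  have "branching_vertices V E \<noteq> {}" using card_branching b_pos by auto
  moreover have "branching_vertices V E \<subseteq> V" by (auto simp: branching_vertices_def)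
  ultimately have "card (induced_edges E (branching_vertices V E)) < b"
    using card_induced_edges_less[OF tree] card_branching by metis
  then have "eB < int b" by simp
  then show "eB + 1 \<le> int b" by linarith
  show "eF + 1 \<le> N 4" if "N 4 \<ge> 1"
  proof -
    have "deg_class V E 4 \<noteq> {}" using that by auto
    then have "card (induced_edges E (deg_class V E 4)) < card (deg_class V E 4)"
      by (rule card_induced_edges_less[OF tree deg_class_subset])
    then have "eF < N 4" by simp
    then show ?thesis by linarith
  qed
  show "2 * int b < int n - 2" by (rule b_less)
qed simp_all

lemma BT1_iff: "BT1 n b V E \<longleftrightarrow> N 3 = 0"
  using CT_star counts.degree_counts_1_iff by (simp add: BT1_def n_deg_eq_card_deg_class)

lemma BT2_iff: "BT2 n b V E \<longleftrightarrow> N 2 = 0"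
  using CT_star counts.degree_counts_2_iff by (simp add: BT2_def n_deg_eq_card_deg_class)

lemma adjacent_degrees_iff: "(\<exists>u\<in>V. \<exists>v\<in>V. {u, v} \<in> E \<and> deg E u = i \<and> deg E v = j) \<longleftrightarrow> P i j \<noteq> 0"
  using adj_count_neq_0_iff by simp

lemma leaf_at_branching_iff:
  "(\<exists>u\<in>V. \<exists>v\<in>V. {u, v} \<in> E \<and> deg E u = 1 \<and> deg E v > 2) \<longleftrightarrow> P 1 3 \<noteq> 0 \<or> P 1 4 \<noteq> 0"
proof
  assume "\<exists>u\<in>V. \<exists>v\<in>V. {u, v} \<in> E \<and> deg E u = 1 \<and> deg E v > 2"
  then obtain u v where uv: "u \<in> V" "v \<in> V" "{u, v} \<in> E" "deg E u = 1" "deg E v > 2" by blast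
  then have "deg E v = 3 \<or> deg E v = 4" using deg_range[OF uv(2)] by auto
  then show "P 1 3 \<noteq> 0 \<or> P 1 4 \<noteq> 0" using uv unfolding adjacent_degrees_iff[symmetric] by blast
next
  assume "P 1 3 \<noteq> 0 \<or> P 1 4 \<noteq> 0"
  then show "\<exists>u\<in>V. \<exists>v\<in>V. {u, v} \<in> E \<and> deg E u = 1 \<and> deg E v > 2"
    unfolding adjacent_degrees_iff[symmetric] by fastforce
qed

lemma deg4_tree_iff:
  "((\<exists>v\<in>V. deg E v = 4) \<and> is_tree {v\<in>V. deg E v = 4} {e\<in>E. e \<subseteq> {v\<in>V. deg E v = 4}})
    \<longleftrightarrow> eF + 1 = N 4"
  (is "?tree \<longleftrightarrow> _")
proof -
  have "?tree \<longleftrightarrow> deg_class V E 4 \<noteq> {} \<and> is_tree (deg_class V E 4) (induced_edges E (deg_class V E 4))"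
    by (auto simp: deg_class_def induced_edges_def)
  also have "\<dots> \<longleftrightarrow> card (induced_edges E (deg_class V E 4)) + 1 = card (deg_class V E 4)"
    (is "_ \<longleftrightarrow> ?card")
  proof
    assume "?card"
    then have "deg_class V E 4 \<noteq> {}" by auto
    with \<open>?card\<close> show "deg_class V E 4 \<noteq> {} \<and> is_tree (deg_class V E 4) (induced_edges E (deg_class V E 4))"
      using induced_subtree[OF tree deg_class_subset] by blast
  next
    assume "deg_class V E 4 \<noteq> {} \<and> is_tree (deg_class V E 4) (induced_edges E (deg_class V E 4))"
    then have "card (induced_edges E (deg_class V E 4)) = card (deg_class V E 4) - 1" "card (deg_class V E 4) \<noteq> 0"
      using finite_deg_class[of 4] by (auto simp: is_tree_def)
    then show ?card by arith
  qed
  finally show ?thesis by (simp add: int_add_1_eq_iff)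
qed

lemma one_deg4_nbr_if_deg4_tree:
  assumes "eF + 1 = N 4"
  shows "\<forall>v\<in>V. deg E v = 3 \<longrightarrow> card {u\<in>V. {u, v} \<in> E \<and> deg E u = 4} \<le> 1"
  using deg4_subtree_one_deg4_nbr assms by (simp add: int_add_1_eq_iff nbrs_with_deg[OF simple])

lemma adj_count_3_4_le_if_one_deg4_nbr:
  assumes "\<forall>v\<in>V. deg E v = 3 \<longrightarrow> card {u\<in>V. {u, v} \<in> E \<and> deg E u = 4} \<le> 1"
  shows "P 3 4 \<le> N 3"
proof -
  have "adj_count V E 3 4 \<le> card (deg_class V E 3)"
    by (rule adj_count_le_card_deg_class) (use assms in \<open>auto simp: deg_class_def nbrs_with_deg[OF simple]\<close>)
  then show ?thesis by simp
qed

lemma internal_paths_short_if_branching_tree: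
  "eB + 1 = int b \<Longrightarrow> \<forall>ps. internal_path V E ps \<longrightarrow> path_len ps = 1"
  using internal_path_length_1 card_branching by (simp add: int_add_1_eq_iff)

lemma no_long_pendent_path_if_adj_count_2_2: "P 2 2 = 0 \<Longrightarrow> \<not> (\<exists>ps. pendent_path V E ps \<and> path_len ps > 2)"
  using long_pendent_path_adj_count_2_2 by auto

lemma adj_count_2_2_eq_0_if_short_paths:
  assumes "\<forall>ps. internal_path V E ps \<longrightarrow> path_len ps = 1"
    and "\<not> (\<exists>ps. pendent_path V E ps \<and> path_len ps > 2)"
  shows "P 2 2 = 0"
proof (rule ccontr)
  assume "P 2 2 \<noteq> 0"
  then obtain ps where "internal_path V E ps \<or> pendent_path V E ps" "path_len ps \<ge> 3"
    using adj_count_2_2_long_path by auto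
  with assms show False by fastforce
qed

lemma adj_count_1_2_le: "P 1 2 \<le> N 2"
  using adj_count_2_1_le adj_count_sym[of 2 1] by simp

lemma branching_vertices_eq_deg4: "N 3 = 0 \<Longrightarrow> branching_vertices V E = deg_class V E 4"
  using finite_deg_class[of 3] branching_vertices_eq by simp

lemma BT1'I:
  assumes "N 3 = 0" "eB + 1 = int b" and "P 2 2 = 0 \<or> P 1 4 = 0"
  shows "BT1' n b V E"
proof -
  have "P 1 3 = 0" using assms(1) counts.row3 counts.nonneg by linarith
  then have "(\<exists>u\<in>V. \<exists>v\<in>V. {u, v} \<in> E \<and> deg E u = 1 \<and> deg E v > 2) \<longrightarrow>
      \<not> (\<exists>ps. pendent_path V E ps \<and> path_len ps > 2)"
    using assms(3) leaf_at_branching_iff no_long_pendent_path_if_adj_count_2_2 by blast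
  moreover have "eF + 1 = N 4"
    using assms(1,2) counts.branching branching_vertices_eq_deg4 by simp
  moreover have "\<not> (\<exists>v\<in>V. deg E v = 3)" using assms(1) finite_deg_class[of 3] by (auto simp: deg_class_def)
  ultimately show ?thesis
    using assms(1) BT1_iff internal_paths_short_if_branching_tree[OF assms(2)] deg4_tree_iff
    unfolding BT1'_def prime_conditions_def by blast
qed

text \<open>By condition (3), a leaf at a vertex of degree 4 excludes long pendent paths, and then
  condition (1) excludes adjacent vertices of degree 2.\<close>

lemma BT1'D:
  assumes "BT1' n b V E"
  shows "N 3 = 0" "eB + 1 = int b" "P 2 2 = 0 \<or> P 1 4 = 0" "P 2 4 \<le> N 2"
proof -
  have short: "\<forall>ps. internal_path V E ps \<longrightarrow> path_len ps = 1"
    and pendent: "(\<exists>u\<in>V. \<exists>v\<in>V. {u, v} \<in> E \<and> deg E u = 1 \<and> deg E v > 2) \<longrightarrow>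
      \<not> (\<exists>ps. pendent_path V E ps \<and> path_len ps > 2)"
    and "eF + 1 = N 4"
    using assms deg4_tree_iff by (auto simp: BT1'_def prime_conditions_def)
  show "N 3 = 0" using assms BT1_iff by (simp add: BT1'_def)
  then show "eB + 1 = int b"
    using \<open>eF + 1 = N 4\<close> counts.branching branching_vertices_eq_deg4 by simp
  show "P 2 2 = 0 \<or> P 1 4 = 0"
    using adj_count_2_2_eq_0_if_short_paths[OF short] pendent leaf_at_branching_iff by blast
  show "P 2 4 \<le> N 2" using adj_count_2_4_le[OF short] by simp
qed

lemma BT2'I:
  assumes "N 2 = 0" "eF + 1 = N 4" and "P 1 4 = 0 \<or> P 3 3 = 0"
  shows "BT2' n b V E"
proof -
  have "eB + 1 = int b" using counts.branching_tree_if_no_deg2[OF assms(1)] .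
  moreover have "P 2 2 = 0" using assms(1) counts.row2 counts.nonneg by linarith
  ultimately show ?thesis
    using assms BT2_iff internal_paths_short_if_branching_tree no_long_pendent_path_if_adj_count_2_2
      one_deg4_nbr_if_deg4_tree deg4_tree_iff adjacent_degrees_iff[of 1 4] adjacent_degrees_iff[of 3 3]
    unfolding BT2'_def prime_conditions_def by blast
qed

lemma BT2'D:
  assumes "BT2' n b V E"
  shows "N 2 = 0" "eF + 1 = N 4" "P 1 4 = 0 \<or> P 3 3 = 0" "P 3 4 \<le> N 3"
proof -
  show "N 2 = 0" using assms BT2_iff by (simp add: BT2'_def)
  show "eF + 1 = N 4" "P 1 4 = 0 \<or> P 3 3 = 0"
    using assms deg4_tree_iff adjacent_degrees_iff[of 1 4] adjacent_degrees_iff[of 3 3]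
    unfolding BT2'_def prime_conditions_def by blast+
  show "P 3 4 \<le> N 3"
    using assms adj_count_3_4_le_if_one_deg4_nbr unfolding BT2'_def prime_conditions_def by blast
qed

lemma M2_eq_bound_1_iff:
  assumes "5 * int b \<le> int n - 4"
  shows "int (M2 E) = 4 * int n + 16 * int b - 12 \<longleftrightarrow> BT1' n b V E"
proof
  assume "BT1' n b V E"
  note BT1' = BT1'D[OF this]
  have "P 1 4 = 0"
    using BT1'(3) counts.small_b_no_leaf_at_deg4[OF assms BT1'(1) _ adj_count_1_2_le BT1'(4)] by blast
  then show "int (M2 E) = 4 * int n + 16 * int b - 12"
    using BT1'(1,2) counts.M_eq_bound_1_iff by simp
qed (use counts.M_eq_bound_1_iff BT1'I in blast)

lemma M2_eq_bound_2_iff: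
  assumes "5 * int b > int n - 4"
  shows "int (M2 E) = 6 * int n + 6 * int b - 20 \<longleftrightarrow> BT1' n b V E"
proof
  assume "BT1' n b V E"
  note BT1' = BT1'D[OF this]
  have "P 2 2 = 0"
    using BT1'(3) counts.medium_b_leaf_at_deg4[OF assms BT1'(1) adj_count_1_2_le] by blast
  then show "int (M2 E) = 6 * int n + 6 * int b - 20"
    using BT1'(1,2) counts.M_eq_bound_2_iff by simp
qed (use counts.M_eq_bound_2_iff BT1'I in blast)

lemma M2_eq_bound_3_iff:
  assumes "7 * int b < 3 * int n - 4"
  shows "int (M2 E) = 10 * int n - 6 * int b - 28 \<longleftrightarrow> BT2' n b V E"
proof
  assume "BT2' n b V E"
  note BT2' = BT2'D[OF this]
  have "P 3 3 = 0"
    using BT2'(3) counts.large_b_leaf_at_deg4[OF assms BT2'(1,2,4)] by blast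
  then show "int (M2 E) = 10 * int n - 6 * int b - 28"
    using BT2'(1,2) counts.M_eq_bound_3_iff counts.branching_tree_if_no_deg2 by simp
qed (use counts.M_eq_bound_3_iff BT2'I in blast)

lemma M2_eq_bound_4_iff:
  assumes "7 * int b \<ge> 3 * int n - 4"
  shows "int (M2 E) = 16 * int n - 20 * int b - 36 \<longleftrightarrow> BT2' n b V E"
proof
  assume "BT2' n b V E"
  note BT2' = BT2'D[OF this]
  have "P 1 4 = 0"
    using BT2'(3) counts.largest_b_no_leaf_at_deg4[OF assms BT2'(1,2)] by blast
  then show "int (M2 E) = 16 * int n - 20 * int b - 36"
    using BT2'(1,2) counts.M_eq_bound_4_iff counts.branching_tree_if_no_deg2 by simp
qed (use counts.M_eq_bound_4_iff BT2'I in blast)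

end

theorem theorem4:
  fixes V :: "'a set" and E :: "'a set set" and n b :: nat
  assumes "1 \<le> b" and "real b < real n / 2 - 1"
    and "CT_star n b V E"
  shows "int (M2 E) \<le> M2_bound n b \<and>
    (real b < (real n - 2) / 3 \<longrightarrow> (int (M2 E) = M2_bound n b \<longleftrightarrow> BT1' n b V E)) \<and>
    ((real n - 2) / 3 \<le> real b \<longrightarrow> (int (M2 E) = M2_bound n b \<longleftrightarrow> BT2' n b V E))"
proof -
  interpret CT_star_tree V E n b
    using assms by unfold_locales (simp_all add: b_less_half_n_minus_1_iff)
  have bound_cases: "M2_bound n b =
    (if 5 * int b \<le> int n - 4 then 4 * int n + 16 * int b - 12
     else if 3 * int b < int n - 2 then 6 * int n + 6 * int b - 20
     else if 7 * int b < 3 * int n - 4 then 10 * int n - 6 * int b - 28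
     else 16 * int n - 20 * int b - 36)"
    unfolding M2_bound_def b_le_n_minus_4_div_5_iff b_less_n_minus_2_div_3_iff b_less_3n_minus_4_div_7_iff ..
  have "int (M2 E) \<le> M2_bound n b"
    unfolding bound_cases using counts.bound_1 counts.bound_2 counts.bound_3 counts.bound_4 by simp
  moreover have "int (M2 E) = M2_bound n b \<longleftrightarrow> BT1' n b V E" if "3 * int b < int n - 2"
    using that M2_eq_bound_1_iff M2_eq_bound_2_iff unfolding bound_cases by auto
  moreover have "int (M2 E) = M2_bound n b \<longleftrightarrow> BT2' n b V E" if "\<not> 3 * int b < int n - 2"
    using that b_pos M2_eq_bound_3_iff M2_eq_bound_4_iff unfolding bound_cases by auto
  ultimately show ?thesis by (simp add: b_less_n_minus_2_div_3_iff not_less[symmetric])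
qed

end
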